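(* Let $E$ be a uniformly convex Banach space. There exists $C>0$ such that for all continuous actions of $H$ on $E$ by affine isometries, all $a,b,c,d\in\mathbb{R}$ and all $\xi\in E$, \[\|\nu_{abcd}\cdot\xi-\widetilde{\nu}_{dcba}\cdot\xi\|\le C\big(e^{a+d-b}+e^{b+d-c}\big)\,\delta_{abcd}(\xi).\]
   Context: $H$ is the simply connected Lie group with Lie algebra spanned by $\mathfrak{X},\mathfrak{Y},\mathfrak{W},\mathfrak{Z}$ with $[\mathfrak{X},\mathfrak{Y}]=\mathfrak{W}$, $[\mathfrak{X},\mathfrak{W}]=2\mathfrak{Z}$, and all other brackets of basis elements zero; $X(t)=\exp(t\mathfrak{X})$ etc. $\gamma_a$ is the centered Gaussian with variance $e^{2a}$ and $L(\gamma_a)$ its pushforward; $\nu_{abcd}=Y(\gamma_a)W(\gamma_b)Z(\gamma_c)X(\gamma_d)$, $\widetilde{\nu}_{dcba}=X(\gamma_d)Z(\gamma_c)W(\gamma_b)Y(\gamma_a)$; $\mu\cdot\xi=\int g\cdot\xi\,d\mu(g)$; $\delta_{L,a}(\xi)=\max_{|t|\le e^a}\|L(t)\cdot\xi-\xi\|$ and $\delta_{abcd}(\xi)=\delta_{Y,a}(\xi)+\delta_{W,b}(\xi)+\delta_{Z,c}(\xi)+\delta_{X,d}(\xi)$. *)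

theory Defs
  imports "HOL-Probability.Probability"
begin

text \<open>H is realised as the semidirect product R^3 x| R, the R^3 = span(Y,W,Z) being abelian
and X acting by the nilpotent derivation N with N Y = W, N W = 2 Z, N Z = 0.
An element (y, w, z, s) stands for (yY + wW + zZ, s); multiplication is
(v, s)(v', s') = (v + exp(sN) v', s + s').  Its Lie algebra has exactly the brackets
[X,Y] = W, [X,W] = 2Z, others zero, and it is simply connected (diffeomorphic to R^4).\<close>

type_synonym H = "real \<times> real \<times> real \<times> real"

definition hmult :: "H \<Rightarrow> H \<Rightarrow> H" where
  "hmult g h = (case g of (y, w, z, s) \<Rightarrow> case h of (y', w', z', s') \<Rightarrow>
     (y + y', w + w' + s * y', z + z' + 2 * s * w' + s\<^sup>2 * y', s + s'))"

definition hone :: H where "hone = (0, 0, 0, 0)"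

definition hX :: "real \<Rightarrow> H" where "hX t = (0, 0, 0, t)"
definition hY :: "real \<Rightarrow> H" where "hY t = (t, 0, 0, 0)"
definition hW :: "real \<Rightarrow> H" where "hW t = (0, t, 0, 0)"
definition hZ :: "real \<Rightarrow> H" where "hZ t = (0, 0, t, 0)"

definition uniformly_convex :: "'e::real_normed_vector itself \<Rightarrow> bool" where
  "uniformly_convex _ \<longleftrightarrow>
     (\<forall>\<epsilon>>0. \<exists>\<delta>>0. \<forall>x y :: 'e. norm x \<le> 1 \<longrightarrow> norm y \<le> 1 \<longrightarrow> norm (x - y) \<ge> \<epsilon> \<longrightarrow>
        norm ((1/2) *\<^sub>R (x + y)) \<le> 1 - \<delta>)"

definition affine_isometry :: "('e::real_normed_vector \<Rightarrow> 'e) \<Rightarrow> bool" where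
  "affine_isometry f \<longleftrightarrow>
     (\<exists>L b. linear L \<and> (\<forall>x. norm (L x) = norm x) \<and> (\<forall>x. f x = L x + b))"

text \<open>Continuous action of H by affine isometries (continuity = continuity of orbit maps).\<close>
definition cont_affine_isometric_action :: "(H \<Rightarrow> 'e::real_normed_vector \<Rightarrow> 'e) \<Rightarrow> bool" where
  "cont_affine_isometric_action act \<longleftrightarrow>
     (\<forall>x. act hone x = x) \<and>
     (\<forall>g h x. act (hmult g h) x = act g (act h x)) \<and>
     (\<forall>g. affine_isometry (act g)) \<and>
     (\<forall>x. continuous_on UNIV (\<lambda>g. act g x))"

text \<open>Density of \<gamma>_a, the centred Gaussian with variance e^(2a) (standard deviation e^a).\<close>
definition gdens :: "real \<Rightarrow> real \<Rightarrow> real" where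
  "gdens a t = normal_density 0 (exp a) t"

text \<open>\<nu>_abcd \<cdot> \<xi> = \<integral> g\<cdot>\<xi> d\<nu>_abcd(g), where \<nu>_abcd = Y(\<gamma>_a) * W(\<gamma>_b) * Z(\<gamma>_c) * X(\<gamma>_d)
is the image of \<gamma>_a \<otimes> \<gamma>_b \<otimes> \<gamma>_c \<otimes> \<gamma>_d under (s1,s2,s3,s4) \<mapsto> Y(s1)W(s2)Z(s3)X(s4);
written as a (vector-valued) integral over R^4 against the product Gaussian density.\<close>
definition nu_act :: "(H \<Rightarrow> 'e::real_normed_vector \<Rightarrow> 'e) \<Rightarrow> real \<Rightarrow> real \<Rightarrow> real \<Rightarrow> real \<Rightarrow> 'e \<Rightarrow> 'e" where
  "nu_act act a b c d \<xi> = integral UNIV (\<lambda>(s1, s2, s3, s4).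
     (gdens a s1 * gdens b s2 * gdens c s3 * gdens d s4) *\<^sub>R
       act (hmult (hY s1) (hmult (hW s2) (hmult (hZ s3) (hX s4)))) \<xi>)"

text \<open>\<nu>~_dcba \<cdot> \<xi> with \<nu>~_dcba = X(\<gamma>_d) * Z(\<gamma>_c) * W(\<gamma>_b) * Y(\<gamma>_a).\<close>
definition nut_act :: "(H \<Rightarrow> 'e::real_normed_vector \<Rightarrow> 'e) \<Rightarrow> real \<Rightarrow> real \<Rightarrow> real \<Rightarrow> real \<Rightarrow> 'e \<Rightarrow> 'e" where
  "nut_act act d c b a \<xi> = integral UNIV (\<lambda>(s4, s3, s2, s1).
     (gdens d s4 * gdens c s3 * gdens b s2 * gdens a s1) *\<^sub>R
       act (hmult (hX s4) (hmult (hZ s3) (hmult (hW s2) (hY s1)))) \<xi>)"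

definition delta1 :: "(H \<Rightarrow> 'e::real_normed_vector \<Rightarrow> 'e) \<Rightarrow> (real \<Rightarrow> H) \<Rightarrow> real \<Rightarrow> 'e \<Rightarrow> real" where
  "delta1 act L a \<xi> = (SUP t \<in> {- exp a .. exp a}. norm (act (L t) \<xi> - \<xi>))"

definition delta4 :: "(H \<Rightarrow> 'e::real_normed_vector \<Rightarrow> 'e) \<Rightarrow> real \<Rightarrow> real \<Rightarrow> real \<Rightarrow> real \<Rightarrow> 'e \<Rightarrow> real" where
  "delta4 act a b c d \<xi> = delta1 act hY a \<xi> + delta1 act hW b \<xi> + delta1 act hZ c \<xi> + delta1 act hX d \<xi>"

end

(* In the coordinates (y, w, z, x) of Y(y) W(w) Z(z) X(x), the measure nu_abcd averages g.xi over
   (y, w, z, x) against a product of Gaussians, whereas X(x) Z(z) W(w) Y(y) = (y, w + xy, z + 2xw + x^2 y, x).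
   One passes from the second average to the first in two moves.  First the central coordinate z is
   shifted back by T = 2xw + x^2 y: translating a Gaussian of width e^c by T changes its average of a
   map growing linearly in z by O(|T| / e^c) times delta_Z, and averaging |T| over the remaining
   variables gives O(e^(b+d-c)) as soon as e^(a+d-b) <= 1.  Then w is shifted back by xy; since now
   W(w) must be corrected by the central element Z(-2xw), the same estimate gives O(e^(a+d-b)) as
   soon as e^(b+d-c) <= 1.  If one of the two exponentials exceeds 1, both averages are within
   O(delta) of xi anyway.  The Banach-valued integrals over R^4 are handled by a Fubini theorem for
   continuous integrands dominated by products of one-variable weights. *)

theory Submission
  imports Defs
begin

section \<open>Integrals over the whole space\<close>

definition cube :: "real \<Rightarrow> 'a::euclidean_space set" where
  "cube r = cbox (- (r *\<^sub>R One)) (r *\<^sub>R One)"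

lemma ball_subset_cube:
  assumes "B \<le> r"
  shows "ball (0::'a::euclidean_space) B \<subseteq> cube r"
proof
  fix x :: 'a assume "x \<in> ball 0 B"
  then have "norm x < B" by simp
  then show "x \<in> cube r"
    unfolding cube_def mem_box using assms
    by (auto simp: inner_diff_left dest!: Basis_le_norm[of _ x])
qed

lemma ball_subset_cube_times_cube:
  assumes "B \<le> r"
  shows "ball (0::'a::euclidean_space \<times> 'b::euclidean_space) B \<subseteq> cube r \<times> cube r"
proof
  fix z :: "'a \<times> 'b" assume "z \<in> ball 0 B"
  then have "fst z \<in> ball 0 B" "snd z \<in> ball 0 B"
    using norm_fst_le[of "fst z" "snd z"] norm_snd_le[of "snd z" "fst z"] by auto
  then show "z \<in> cube r \<times> cube r"
    using ball_subset_cube[OF assms, where 'a='a] ball_subset_cube[OF assms, where 'a='b]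
    by (auto simp: mem_Times_iff)
qed

lemma integral_tendsto_UNIV:
  fixes f :: "'a::euclidean_space \<Rightarrow> 'b::banach"
  assumes f: "f integrable_on UNIV" and box: "\<And>r. \<exists>a b. C r = cbox a b"
    and ball: "\<And>B r. B \<le> r \<Longrightarrow> ball 0 B \<subseteq> C r"
  shows "((\<lambda>r. integral (C r) f) \<longlongrightarrow> integral UNIV f) at_top"
proof (rule tendstoI)
  fix e :: real assume "e > 0"
  have "\<not> (\<exists>a b. (UNIV :: 'a set) = cbox a b)"
    using bounded_cbox not_bounded_UNIV by metis
  from has_integral_altD[OF integrable_integral[OF f] this \<open>e > 0\<close>]
  obtain B where B: "\<forall>a b. ball 0 B \<subseteq> cbox a b \<longrightarrow>
      (\<exists>z. (f has_integral z) (cbox a b) \<and> norm (z - integral UNIV f) < e)"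
    by (simp only: UNIV_I if_True) blast
  show "\<forall>\<^sub>F r in at_top. dist (integral (C r) f) (integral UNIV f) < e"
    using eventually_ge_at_top[of B]
  proof eventually_elim
    case (elim r)
    obtain a b where "C r = cbox a b" using box by blast
    with B ball[OF elim] show ?case
      by (auto simp: dist_norm dest: integral_unique)
  qed
qed

lemma norm_integral_UNIV_sub_cbox_le:
  fixes f :: "'a::euclidean_space \<Rightarrow> 'b::banach"
  assumes f: "f integrable_on UNIV" and g: "g integrable_on UNIV"
    and fg: "\<And>x. norm (f x) \<le> g x"
  shows "norm (integral UNIV f - integral (cbox a b) f) \<le> integral UNIV g - integral (cbox a b) g"
proof -
  have fS: "f integrable_on cbox a b" and gS: "g integrable_on cbox a b"
    using integrable_on_subcbox f g by blast+
  have "norm (integral (UNIV - cbox a b) f) \<le> integral (UNIV - cbox a b) g"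
    using integrable_setdiff[OF integrable_integral[OF f] integrable_integral[OF fS]]
      integrable_setdiff[OF integrable_integral[OF g] integrable_integral[OF gS]]
    by (intro integral_norm_bound_integral fg) auto
  then show ?thesis
    using integral_setdiff[OF f fS] integral_setdiff[OF g gS] by simp
qed

lemma integrable_lborel_prod_mult:
  fixes p :: "'a::euclidean_space \<Rightarrow> real" and q :: "'b::euclidean_space \<Rightarrow> real"
  assumes p: "integrable lborel p" and q: "integrable lborel q"
    and p0: "\<And>x. 0 \<le> p x" and q0: "\<And>y. 0 \<le> q y"
  shows "integrable lborel (\<lambda>(x, y). p x * q y)"
proof -
  have [measurable]: "p \<in> borel_measurable lborel" "q \<in> borel_measurable lborel"
    using p q by auto
  have "(\<integral>\<^sup>+z. ennreal (case z of (x, y) \<Rightarrow> p x * q y) \<partial>(lborel \<Otimes>\<^sub>M lborel))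
      = (\<integral>\<^sup>+x. ennreal (p x) * (\<integral>\<^sup>+y. ennreal (q y) \<partial>lborel) \<partial>lborel)"
    by (subst lborel.nn_integral_fst[symmetric])
       (auto simp: ennreal_mult p0 q0 nn_integral_cmult)
  also have "\<dots> = ennreal (integral\<^sup>L lborel p) * ennreal (integral\<^sup>L lborel q)"
    using p q p0 q0 by (simp add: nn_integral_multc nn_integral_eq_integral)
  finally have "(\<integral>\<^sup>+z. ennreal (case z of (x, y) \<Rightarrow> p x * q y) \<partial>(lborel \<Otimes>\<^sub>M lborel)) < \<infinity>"
    by (simp add: ennreal_mult_less_top)
  then have "integrable (lborel \<Otimes>\<^sub>M lborel) (\<lambda>(x, y). p x * q y)"
    by (intro integrableI_nonneg) (auto simp: p0 q0)
  then show ?thesis by (simp add: lborel_prod)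
qed

lemma integrable_on_UNIV_continuous_dominated:
  fixes f :: "'a::euclidean_space \<Rightarrow> 'b::banach"
  assumes "continuous_on UNIV f" and "\<And>x. norm (f x) \<le> g x" and "g integrable_on UNIV"
  shows "f integrable_on UNIV"
  using assms
  by (intro integrable_on_all_intervals_UNIV[of f g] integrable_continuous) (auto intro: continuous_on_subset)

lemma integral_cube_tail:
  fixes q :: "'a::euclidean_space \<Rightarrow> real"
  assumes q: "q integrable_on UNIV" and q0: "\<And>y. 0 \<le> q y"
  shows "((\<lambda>r. integral UNIV q - integral (cube r) q) \<longlongrightarrow> 0) at_top"
    and "0 \<le> integral UNIV q - integral (cube r) q"
proof -
  have "((\<lambda>r. integral (cube r) q) \<longlongrightarrow> integral UNIV q) at_top"
    by (rule integral_tendsto_UNIV[OF q _ ball_subset_cube]) (auto simp: cube_def)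
  then show "((\<lambda>r. integral UNIV q - integral (cube r) q) \<longlongrightarrow> 0) at_top"
    by (auto intro: tendsto_eq_intros)
  show "0 \<le> integral UNIV q - integral (cube r) q"
    using integral_subset_le[OF _ integrable_on_subcbox[OF q] q] q0 by (simp add: cube_def)
qed

context
  fixes f :: "'a::euclidean_space \<times> 'b::euclidean_space \<Rightarrow> 'e::banach"
    and p :: "'a \<Rightarrow> real" and q :: "'b \<Rightarrow> real"
  assumes f: "continuous_on UNIV f"
    and p_int: "integrable lborel p" and q_int: "integrable lborel q"
    and p0: "\<And>x. 0 \<le> p x" and q0: "\<And>y. 0 \<le> q y"
    and dom: "\<And>x y. norm (f (x, y)) \<le> p x * q y"
begin

lemma integrable_on_sections:
  "f integrable_on UNIV" "(\<lambda>y. f (x, y)) integrable_on UNIV"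
proof -
  have pq: "(\<lambda>(x, y). p x * q y) integrable_on UNIV"
    using integrable_on_lborel integrable_lborel_prod_mult[OF p_int q_int p0 q0] by blast
  show "f integrable_on UNIV"
    by (rule integrable_on_UNIV_continuous_dominated[OF f _ pq]) (simp add: dom split: prod.split)
  show "(\<lambda>y. f (x, y)) integrable_on UNIV"
    using integrable_on_lborel[OF q_int]
    by (intro integrable_on_UNIV_continuous_dominated[OF _ dom] integrable_on_mult_right
        continuous_on_compose2[OF f]) (auto intro!: continuous_intros)
qed

lemma norm_section_integral_sub_cube_le:
  "norm (integral UNIV (\<lambda>y. f (x, y)) - integral (cube r) (\<lambda>y. f (x, y)))
    \<le> p x * (integral UNIV q - integral (cube r) q)"
  using norm_integral_UNIV_sub_cbox_le[OF integrable_on_sections(2) integrable_on_mult_right dom]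
    integrable_on_lborel[OF q_int]
  by (simp add: cube_def algebra_simps)

lemma continuous_on_cube_section_integral:
  "continuous_on UNIV (\<lambda>x. integral (cube r) (\<lambda>y. f (x, y)))"
  unfolding cube_def
  by (rule integral_continuous_on_param) (auto intro: continuous_on_subset[OF f])

lemma integrable_on_section_integral:
  assumes p: "continuous_on UNIV p"
  shows "(\<lambda>x. integral UNIV (\<lambda>y. f (x, y))) integrable_on UNIV"
proof (rule integrable_on_all_intervals_UNIV)
  show "(\<lambda>x. integral UNIV (\<lambda>y. f (x, y))) integrable_on cbox a b" for a b
  proof (rule integrable_uniform_limit)
    fix e :: real assume "e > 0"
    have "bounded (p ` cbox a b)"
      by (intro compact_imp_bounded compact_continuous_image continuous_on_subset[OF p]) auto
    then obtain M where "M > 0" and M: "\<And>x. x \<in> cbox a b \<Longrightarrow> \<bar>p x\<bar> \<le> M"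
      by (auto simp: bounded_pos)
    obtain r where r: "integral UNIV q - integral (cube r) q < e / M"
      using integral_cube_tail(1)[OF integrable_on_lborel[OF q_int] q0] \<open>e > 0\<close> \<open>M > 0\<close>
      by (auto dest!: order_tendstoD(2)[of _ _ _ "e / M"] eventually_happens)
    show "\<exists>g. (\<forall>x\<in>cbox a b. norm (integral UNIV (\<lambda>y. f (x, y)) - g x) \<le> e) \<and> g integrable_on cbox a b"
    proof (intro exI conjI ballI)
      fix x assume "x \<in> cbox a b"
      have "p x * (integral UNIV q - integral (cube r) q) \<le> M * (e / M)"
        using M[OF \<open>x \<in> cbox a b\<close>] r p0[of x]
          integral_cube_tail(2)[OF integrable_on_lborel[OF q_int] q0, of r]
        by (intro mult_mono) auto
      then show "norm (integral UNIV (\<lambda>y. f (x, y)) - integral (cube r) (\<lambda>y. f (x, y))) \<le> e"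
        using norm_section_integral_sub_cube_le[of x r] \<open>M > 0\<close> by simp
    qed (auto intro: integrable_continuous continuous_on_subset[OF continuous_on_cube_section_integral])
  qed
  show "norm (integral UNIV (\<lambda>y. f (x, y))) \<le> p x * integral UNIV q" for x
    using integral_norm_bound_integral[OF integrable_on_sections(2) integrable_on_mult_right dom]
      integrable_on_lborel[OF q_int] by simp
  show "(\<lambda>x. p x * integral UNIV q) integrable_on UNIV"
    using integrable_on_lborel[OF p_int] by (rule integrable_on_mult_left)
qed

lemma integral_UNIV_prod_continuous:
  assumes p: "continuous_on UNIV p"
  shows "integral UNIV f = integral UNIV (\<lambda>x. integral UNIV (\<lambda>y. f (x, y)))"
proof -
  define G where "G x = integral UNIV (\<lambda>y. f (x, y))" for x
  define Gr where "Gr r x = integral (cube r) (\<lambda>y. f (x, y))" for r x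
  define tail where "tail r = integral UNIV q - integral (cube r) q" for r
  note tail = integral_cube_tail[OF integrable_on_lborel[OF q_int] q0, folded tail_def]
  have G: "G integrable_on UNIV"
    unfolding G_def[abs_def] by (rule integrable_on_section_integral[OF p])
  have "norm (integral (cube r) (Gr r) - integral (cube r) G) \<le> integral UNIV p * tail r" for r
  proof -
    have Gr_cube: "Gr r integrable_on cube r" and G_cube: "G integrable_on cube r"
      and p_cube: "p integrable_on cube r"
      using continuous_on_cube_section_integral integrable_on_subcbox[OF G]
        integrable_on_subcbox[OF integrable_on_lborel[OF p_int]]
      by (auto simp: cube_def Gr_def[abs_def] intro: integrable_continuous continuous_on_subset)
    have "norm (integral (cube r) (\<lambda>x. Gr r x - G x)) \<le> integral (cube r) (\<lambda>x. p x * tail r)"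
      using norm_section_integral_sub_cube_le
      by (intro integral_norm_bound_integral integrable_diff Gr_cube G_cube integrable_on_mult_left p_cube)
         (simp add: norm_minus_commute G_def Gr_def tail_def)
    also have "\<dots> \<le> integral UNIV p * tail r"
      using integral_subset_le[OF _ p_cube integrable_on_lborel[OF p_int]] p0 tail(2)
      by (auto intro: mult_right_mono)
    finally show ?thesis
      by (simp add: integral_diff[OF Gr_cube G_cube])
  qed
  then have "((\<lambda>r. integral (cube r) (Gr r) - integral (cube r) G) \<longlongrightarrow> 0) at_top"
    by (intro Lim_null_comparison[OF _ tendsto_mult_right_zero[OF tail(1), of "integral UNIV p"]]) auto
  moreover have "((\<lambda>r. integral (cube r) G) \<longlongrightarrow> integral UNIV G) at_top"
    by (rule integral_tendsto_UNIV[OF G _ ball_subset_cube]) (auto simp: cube_def)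
  moreover have "integral (cube r \<times> cube r) f = integral (cube r) (Gr r)" for r
    unfolding cube_def Gr_def cbox_Pair_eq[symmetric]
    by (rule integral_prod_continuous) (auto intro: continuous_on_subset[OF f])
  ultimately have "((\<lambda>r. integral (cube r \<times> cube r) f) \<longlongrightarrow> integral UNIV G) at_top"
    using tendsto_add by fastforce
  moreover have "((\<lambda>r. integral (cube r \<times> cube r) f) \<longlongrightarrow> integral UNIV f) at_top"
    by (rule integral_tendsto_UNIV[OF integrable_on_sections(1) _ ball_subset_cube_times_cube])
       (auto simp: cube_def cbox_Pair_eq[symmetric])
  ultimately show ?thesis
    unfolding G_def[abs_def] by (rule tendsto_unique[OF trivial_limit_at_top_linorder, rotated])
qed

end

lemma has_integral_UNIV_twiddle:
  fixes f :: "'b::euclidean_space \<Rightarrow> 'e::banach" and g :: "'a::euclidean_space \<Rightarrow> 'b"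
  assumes hg: "\<And>x. h (g x) = x" and gh: "\<And>y. g (h y) = y"
    and g_cont: "\<And>x. continuous (at x) g"
    and g_box: "\<And>u v. \<exists>w z. g ` cbox u v = cbox w z"
    and h_box: "\<And>u v. \<exists>w z. h ` cbox u v = cbox w z"
    and content: "\<And>u v. measure lborel (g ` cbox u v) = measure lborel (cbox u v)"
    and h_bounded: "\<And>B. bounded (h ` ball 0 B)"
    and f: "(f has_integral i) UNIV"
  shows "((\<lambda>x. f (g x)) has_integral i) UNIV"
proof -
  have no_box: "\<not> (\<exists>a b. (UNIV :: 'c::euclidean_space set) = cbox a b)"
    using bounded_cbox not_bounded_UNIV by metis
  have "\<exists>B'>0. \<forall>a b. ball 0 B' \<subseteq> cbox a b \<longrightarrow>
      (\<exists>z. ((\<lambda>x. f (g x)) has_integral z) (cbox a b) \<and> norm (z - i) < e)"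
    if "e > 0" for e
  proof -
    from has_integral_altD[OF f no_box \<open>e > 0\<close>]
    obtain B where B: "\<forall>a b. ball 0 B \<subseteq> cbox a b \<longrightarrow>
        (\<exists>z. (f has_integral z) (cbox a b) \<and> norm (z - i) < e)"
      by (simp only: UNIV_I if_True) blast
    obtain B' where "B' > 0" and B': "h ` ball 0 B \<subseteq> ball 0 B'"
      using bounded_subset_ballD[OF h_bounded[of B], of 0] by blast
    show ?thesis
    proof (intro exI[of _ B'] conjI allI impI)
      fix a b :: 'a assume ab: "ball 0 B' \<subseteq> cbox a b"
      obtain c d where cd: "g ` cbox a b = cbox c d" using g_box by blast
      have "ball 0 B \<subseteq> g ` cbox a b"
      proof
        fix y :: 'b assume "y \<in> ball 0 B"
        then have "h y \<in> cbox a b" using B' ab by blast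
        then show "y \<in> g ` cbox a b" by (metis gh image_eqI)
      qed
      then have "ball 0 B \<subseteq> cbox c d" by (simp only: cd)
      with B obtain I where I: "(f has_integral I) (cbox c d)" "norm (I - i) < e"
        by blast
      have "((\<lambda>x. f (g x)) has_integral (1 / 1) *\<^sub>R I) (h ` cbox c d)"
        by (rule has_integral_twiddle[OF zero_less_one hg gh g_cont g_box h_box _ I(1)])
           (simp add: content)
      moreover have "h ` cbox c d = cbox a b"
        unfolding cd[symmetric] image_comp by (simp add: o_def hg)
      ultimately show "\<exists>I. ((\<lambda>x. f (g x)) has_integral I) (cbox a b) \<and> norm (I - i) < e"
        using I(2) by auto
    qed (use \<open>B' > 0\<close> in auto)
  qed
  then show ?thesis
    by (subst has_integral_alt) (simp add: no_box)
qed

lemma has_integral_UNIV_swap: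
  fixes f :: "'a::euclidean_space \<times> 'b::euclidean_space \<Rightarrow> 'e::banach"
  assumes "(f has_integral i) UNIV"
  shows "((\<lambda>z. f (prod.swap z)) has_integral i) UNIV"
proof (rule has_integral_UNIV_twiddle[OF _ _ _ _ _ _ _ assms])
  have box: "prod.swap ` cbox u v = cbox (prod.swap u) (prod.swap v)"
    for u v :: "'c::euclidean_space \<times> 'd::euclidean_space"
    by (cases u; cases v) simp
  show "\<exists>w z. prod.swap ` cbox u v = cbox w z" for u v :: "'b \<times> 'a"
    using box by blast
  show "\<exists>w z. prod.swap ` cbox u v = cbox w z" for u v :: "'a \<times> 'b"
    using box by blast
  show "measure lborel (prod.swap ` cbox u v) = measure lborel (cbox u v)" for u v :: "'b \<times> 'a"
    unfolding box by (cases u; cases v) (simp add: content_Pair)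
  show "bounded (prod.swap ` ball 0 B :: ('b \<times> 'a) set)" for B
    by (rule bounded_subset[OF bounded_ball[of 0 B]]) (auto simp: norm_Pair add.commute)
qed (auto intro: isCont_swap)

lemma has_integral_UNIV_translate:
  fixes f :: "real \<Rightarrow> 'e::banach"
  assumes "(f has_integral i) UNIV"
  shows "((\<lambda>x. f (x + c)) has_integral i) UNIV"
proof (rule has_integral_UNIV_twiddle[OF _ _ _ _ _ _ _ assms, of "\<lambda>x. x - c"])
  have box: "(\<lambda>x. x + d) ` cbox u v = cbox (u + d) (v + d)" for u v d :: real
    by simp
  show "\<exists>w z. (\<lambda>x. x + c) ` cbox u v = cbox w z" "\<exists>w z. (\<lambda>x. x - c) ` cbox u v = cbox w z" for u v
    using box[of u v c] box[of u v "- c"] by auto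
  show "measure lborel ((\<lambda>x. x + c) ` cbox u v) = measure lborel (cbox u v)" for u v
    by (simp add: box content_real_if)
  show "bounded ((\<lambda>x. x - c) ` ball 0 B)" for B
    using bounded_translation[OF bounded_ball, of "- c" 0 B] by simp
qed (auto intro!: continuous_intros)

lemma integral_UNIV_reverse4:
  fixes F :: "real \<times> real \<times> real \<times> real \<Rightarrow> 'e::banach"
  assumes "F integrable_on UNIV"
  shows "integral UNIV (\<lambda>(s1, s2, s3, s4). F (s4, s3, s2, s1)) = integral UNIV F"
proof -
  define r :: "real \<times> real \<times> real \<times> real \<Rightarrow> _" where "r = (\<lambda>(s1, s2, s3, s4). (s4, s3, s2, s1))"
  have rr: "r (r s) = s" for s by (cases s) (simp add: r_def)
  have box: "r ` cbox u v = cbox (r u) (r v)" for u v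
  proof -
    have "r ` A = r -` A" for A
    proof (intro set_eqI iffI)
      fix s assume "s \<in> r -` A"
      then show "s \<in> r ` A" using image_eqI[of s r "r s"] rr by simp
    qed (auto simp: rr)
    then show ?thesis
      by (cases u; cases v) (auto simp: r_def cbox_Pair_eq)
  qed
  have "((\<lambda>s. F (r s)) has_integral integral UNIV F) UNIV"
  proof (rule has_integral_UNIV_twiddle[where g = r and h = r, OF rr rr _ _ _ _ _
        integrable_integral[OF assms]])
    show "measure lborel (r ` cbox u v) = measure lborel (cbox u v)" for u v
      unfolding box by (cases u; cases v) (simp add: r_def content_Pair mult_ac)
    show "bounded (r ` ball 0 B)" for B
      by (rule bounded_subset[OF bounded_ball[of 0 B]])
         (auto simp: r_def norm_Pair add_ac split: prod.splits)
    show "continuous (at s) r" for s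
      unfolding r_def split_def by (intro continuous_intros)
  qed (use box in blast)+
  then show ?thesis
    by (simp add: integral_unique r_def split_def)
qed

definition integrable_weight :: "('a::euclidean_space \<Rightarrow> real) \<Rightarrow> bool" where
  "integrable_weight p \<longleftrightarrow> continuous_on UNIV p \<and> integrable lborel p \<and> (\<forall>x. 0 \<le> p x)"

lemma integrable_weight_cmult:
  "integrable_weight p \<Longrightarrow> 0 \<le> c \<Longrightarrow> integrable_weight (\<lambda>x. c * p x)"
  unfolding integrable_weight_def by (auto intro: continuous_on_mult_left)

lemma integrable_weight_prod:
  assumes "integrable_weight p" "integrable_weight q"
  shows "integrable_weight (\<lambda>(x, y). p x * q y)"
proof -
  from assms have p: "continuous_on UNIV p" "integrable lborel p" "\<And>x. 0 \<le> p x"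
    and q: "continuous_on UNIV q" "integrable lborel q" "\<And>y. 0 \<le> q y"
    by (auto simp: integrable_weight_def)
  have "continuous_on UNIV (\<lambda>z. p (fst z) * q (snd z))"
    by (intro continuous_on_mult continuous_on_compose2[OF p(1)] continuous_on_compose2[OF q(1)]
        continuous_on_fst continuous_on_snd continuous_on_id) auto
  then have "continuous_on UNIV (\<lambda>(x, y). p x * q y)"
    by (simp add: case_prod_beta')
  moreover have "integrable lborel (\<lambda>(x, y). p x * q y)"
    by (rule integrable_lborel_prod_mult[OF p(2) q(2) p(3) q(3)])
  ultimately show ?thesis
    unfolding integrable_weight_def using p(3) q(3) by (auto intro: mult_nonneg_nonneg)
qed

lemma integral_UNIV_prod_continuous_swap:
  fixes f :: "'a::euclidean_space \<times> 'b::euclidean_space \<Rightarrow> 'e::banach"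
    and p :: "'a \<Rightarrow> real" and q :: "'b \<Rightarrow> real"
  assumes f: "continuous_on UNIV f" and q: "continuous_on UNIV q"
    and p_int: "integrable lborel p" and q_int: "integrable lborel q"
    and p0: "\<And>x. 0 \<le> p x" and q0: "\<And>y. 0 \<le> q y"
    and dom: "\<And>x y. norm (f (x, y)) \<le> p x * q y"
  shows "f integrable_on UNIV"
    and "\<And>y. (\<lambda>x. f (x, y)) integrable_on UNIV"
    and "(\<lambda>y. integral UNIV (\<lambda>x. f (x, y))) integrable_on UNIV"
    and "integral UNIV f = integral UNIV (\<lambda>y. integral UNIV (\<lambda>x. f (x, y)))"
proof -
  have f_swap: "continuous_on UNIV (\<lambda>z. f (prod.swap z))"
    by (rule continuous_on_compose2[OF f continuous_on_swap]) auto
  have "norm (f (prod.swap (y, x))) \<le> q y * p x" for x y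
    using dom[of x y] by (simp add: mult.commute)
  note Fubini = integrable_on_sections[OF f_swap q_int p_int q0 p0 this]
    integrable_on_section_integral[OF f_swap q_int p_int q0 p0 this q]
    integral_UNIV_prod_continuous[OF f_swap q_int p_int q0 p0 this q]
  have "((\<lambda>z. f (prod.swap (prod.swap z))) has_integral integral UNIV (\<lambda>z. f (prod.swap z))) UNIV"
    by (rule has_integral_UNIV_swap[OF integrable_integral[OF Fubini(1)]])
  then have "(f has_integral integral UNIV (\<lambda>y. integral UNIV (\<lambda>x. f (x, y)))) UNIV"
    using Fubini(4) by simp
  then show "f integrable_on UNIV"
    and "integral UNIV f = integral UNIV (\<lambda>y. integral UNIV (\<lambda>x. f (x, y)))"
    by (auto simp: integrable_on_def integral_unique)
  show "\<And>y. (\<lambda>x. f (x, y)) integrable_on UNIV"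
    and "(\<lambda>y. integral UNIV (\<lambda>x. f (x, y))) integrable_on UNIV"
    using Fubini(2,3) by simp_all
qed

lemma integral_UNIV_prod_mult:
  assumes p: "integrable_weight p" and q: "integrable_weight q"
  shows "(\<lambda>(x, y). p x * q y) integrable_on UNIV"
    and "integral UNIV (\<lambda>(x, y). p x * q y) = integral UNIV p * integral UNIV q"
proof -
  from p q have pc: "continuous_on UNIV p" and pq: "integrable lborel p" "integrable lborel q"
    and p0: "\<And>x. 0 \<le> p x" and q0: "\<And>y. 0 \<le> q y"
    by (auto simp: integrable_weight_def)
  have c: "continuous_on UNIV (\<lambda>(x, y). p x * q y)"
    using integrable_weight_prod[OF p q] by (simp add: integrable_weight_def)
  have d: "norm (case (x, y) of (x, y) \<Rightarrow> p x * q y) \<le> p x * q y" for x y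
    using p0[of x] q0[of y] by simp
  show "(\<lambda>(x, y). p x * q y) integrable_on UNIV"
    by (rule integrable_on_sections(1)[OF c pq p0 q0 d])
  show "integral UNIV (\<lambda>(x, y). p x * q y) = integral UNIV p * integral UNIV q"
    using integral_UNIV_prod_continuous[OF c pq p0 q0 d pc] by simp
qed

lemma integral_UNIV_prod4_mult:
  assumes "integrable_weight p1" "integrable_weight p2" "integrable_weight p3" "integrable_weight p4"
  shows "(\<lambda>(s1, s2, s3, s4). p1 s1 * p2 s2 * p3 s3 * p4 s4) integrable_on UNIV"
    and "integral UNIV (\<lambda>(s1, s2, s3, s4). p1 s1 * p2 s2 * p3 s3 * p4 s4)
    = integral UNIV p1 * integral UNIV p2 * integral UNIV p3 * integral UNIV p4"
proof -
  define p34 where "p34 = (\<lambda>(s3, s4). p3 s3 * p4 s4)"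
  define p234 where "p234 = (\<lambda>(s2, t). p2 s2 * p34 t)"
  have w: "integrable_weight p34" "integrable_weight p234"
    unfolding p34_def p234_def by (intro integrable_weight_prod assms)+
  have eq: "(\<lambda>(s1, s2, s3, s4). p1 s1 * p2 s2 * p3 s3 * p4 s4) = (\<lambda>(s1, t). p1 s1 * p234 t)"
    by (auto simp: p34_def p234_def mult_ac)
  then show "(\<lambda>(s1, s2, s3, s4). p1 s1 * p2 s2 * p3 s3 * p4 s4) integrable_on UNIV"
    using integral_UNIV_prod_mult(1)[OF assms(1) w(2)] by simp
  from eq show "integral UNIV (\<lambda>(s1, s2, s3, s4). p1 s1 * p2 s2 * p3 s3 * p4 s4)
    = integral UNIV p1 * integral UNIV p2 * integral UNIV p3 * integral UNIV p4"
    using integral_UNIV_prod_mult(2)[OF assms(1) w(2)] integral_UNIV_prod_mult(2)[OF assms(2) w(1)]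
      integral_UNIV_prod_mult(2)[OF assms(3,4)]
    by (simp add: p34_def p234_def mult_ac)
qed

(* Both comparison steps shift the second coordinate, which is therefore integrated innermost. *)
lemma integral_UNIV_real4_iterated:
  fixes F :: "real \<times> real \<times> real \<times> real \<Rightarrow> 'e::banach"
  assumes F: "continuous_on UNIV F"
    and p: "integrable_weight p1" "integrable_weight p2" "integrable_weight p3" "integrable_weight p4"
    and dom: "\<And>s1 s2 s3 s4. norm (F (s1, s2, s3, s4)) \<le> p1 s1 * p2 s2 * p3 s3 * p4 s4"
  shows "F integrable_on UNIV"
    and "\<And>s1 s3 s4. (\<lambda>s2. F (s1, s2, s3, s4)) integrable_on UNIV"
    and "\<And>s1. (\<lambda>(s3, s4). integral UNIV (\<lambda>s2. F (s1, s2, s3, s4))) integrable_on UNIV"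
    and "(\<lambda>s1. integral UNIV (\<lambda>(s3, s4). integral UNIV (\<lambda>s2. F (s1, s2, s3, s4)))) integrable_on UNIV"
    and "integral UNIV F
      = integral UNIV (\<lambda>s1. integral UNIV (\<lambda>(s3, s4). integral UNIV (\<lambda>s2. F (s1, s2, s3, s4))))"
proof -
  have w: "continuous_on UNIV p" "integrable lborel p" "\<And>x. 0 \<le> p x" if "integrable_weight p" for p :: "'a::euclidean_space \<Rightarrow> real"
    using that by (auto simp: integrable_weight_def)
  define p34 where "p34 = (\<lambda>(s3, s4). p3 s3 * p4 s4)"
  have p34: "integrable_weight p34" unfolding p34_def by (rule integrable_weight_prod[OF p(3,4)])
  have p234: "integrable_weight (\<lambda>(s2, t). p2 s2 * p34 t)" by (rule integrable_weight_prod[OF p(2) p34])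
  have outer_dom: "norm (F (s1, t)) \<le> p1 s1 * (case t of (s2, t) \<Rightarrow> p2 s2 * p34 t)" for s1 t
    using dom[of s1 "fst t" "fst (snd t)" "snd (snd t)"] by (simp add: p34_def split_def mult_ac)
  note outer = integrable_on_sections[OF F w(2)[OF p(1)] w(2)[OF p234] w(3)[OF p(1)] w(3)[OF p234] outer_dom]
    integrable_on_section_integral[OF F w(2)[OF p(1)] w(2)[OF p234] w(3)[OF p(1)] w(3)[OF p234] outer_dom
      w(1)[OF p(1)]]
    integral_UNIV_prod_continuous[OF F w(2)[OF p(1)] w(2)[OF p234] w(3)[OF p(1)] w(3)[OF p234] outer_dom
      w(1)[OF p(1)]]
  have inner: "(\<lambda>t. F (s1, t)) integrable_on UNIV \<and>
      (\<forall>s3 s4. (\<lambda>s2. F (s1, s2, s3, s4)) integrable_on UNIV) \<and>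
      (\<lambda>(s3, s4). integral UNIV (\<lambda>s2. F (s1, s2, s3, s4))) integrable_on UNIV \<and>
      integral UNIV (\<lambda>t. F (s1, t)) = integral UNIV (\<lambda>(s3, s4). integral UNIV (\<lambda>s2. F (s1, s2, s3, s4)))"
    for s1
  proof -
    have "continuous_on UNIV (\<lambda>t. F (s1, t))"
      by (rule continuous_on_compose2[OF F]) (auto intro: continuous_intros)
    moreover have "integrable lborel (\<lambda>s2. p1 s1 * p2 s2)"
      using w(2)[OF p(2)] by simp
    moreover have "norm (F (s1, s2, t)) \<le> (p1 s1 * p2 s2) * p34 t" for s2 t
      using dom[of s1 s2 "fst t" "snd t"] by (simp add: p34_def split_def mult_ac)
    moreover have "\<And>s2. 0 \<le> p1 s1 * p2 s2" using w(3)[OF p(1)] w(3)[OF p(2)] by simp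
    ultimately show ?thesis
      using integral_UNIV_prod_continuous_swap[of "\<lambda>(s2, t). F (s1, s2, t)" p34
        "\<lambda>s2. p1 s1 * p2 s2", OF _ w(1)[OF p34] _ w(2)[OF p34] _ w(3)[OF p34]]
      by (auto simp: split_def)
  qed
  show "F integrable_on UNIV" by (rule outer(1))
  show "\<And>s1 s3 s4. (\<lambda>s2. F (s1, s2, s3, s4)) integrable_on UNIV"
    and "\<And>s1. (\<lambda>(s3, s4). integral UNIV (\<lambda>s2. F (s1, s2, s3, s4))) integrable_on UNIV"
    using inner by blast+
  show "(\<lambda>s1. integral UNIV (\<lambda>(s3, s4). integral UNIV (\<lambda>s2. F (s1, s2, s3, s4)))) integrable_on UNIV"
    and "integral UNIV F
      = integral UNIV (\<lambda>s1. integral UNIV (\<lambda>(s3, s4). integral UNIV (\<lambda>s2. F (s1, s2, s3, s4))))"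
    using outer(3,4) inner by simp_all
qed

lemma norm_integral_UNIV_real4_diff_le:
  fixes F G :: "real \<times> real \<times> real \<times> real \<Rightarrow> 'e::banach"
  assumes F: "continuous_on UNIV F" and G: "continuous_on UNIV G"
    and p: "integrable_weight p1" "integrable_weight p2" "integrable_weight p3" "integrable_weight p4"
    and F_dom: "\<And>s1 s2 s3 s4. norm (F (s1, s2, s3, s4)) \<le> p1 s1 * p2 s2 * p3 s3 * p4 s4"
    and G_dom: "\<And>s1 s2 s3 s4. norm (G (s1, s2, s3, s4)) \<le> p1 s1 * p2 s2 * p3 s3 * p4 s4"
    and q: "integrable_weight q1" "integrable_weight q3" "integrable_weight q4"
    and inner: "\<And>s1 s3 s4. norm (integral UNIV (\<lambda>s2. F (s1, s2, s3, s4))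
                  - integral UNIV (\<lambda>s2. G (s1, s2, s3, s4))) \<le> q1 s1 * q3 s3 * q4 s4"
  shows "norm (integral UNIV F - integral UNIV G)
    \<le> integral UNIV q1 * integral UNIV q3 * integral UNIV q4"
proof -
  note IF = integral_UNIV_real4_iterated[OF F p F_dom]
  note IG = integral_UNIV_real4_iterated[OF G p G_dom]
  define f where "f s1 = (\<lambda>t. integral UNIV (\<lambda>s2. F (s1, s2, t)))" for s1
  define g where "g s1 = (\<lambda>t. integral UNIV (\<lambda>s2. G (s1, s2, t)))" for s1
  have q1: "q1 integrable_on UNIV" "\<And>s. 0 \<le> q1 s"
    using q(1) integrable_on_lborel by (auto simp: integrable_weight_def)
  note q34 = integral_UNIV_prod_mult[OF q(2,3)]
  have fg: "f s1 integrable_on UNIV" "g s1 integrable_on UNIV" for s1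
    using IF(3) IG(3) by (simp_all add: f_def g_def split_def)
  have "norm (integral UNIV (f s1) - integral UNIV (g s1))
      \<le> q1 s1 * (integral UNIV q3 * integral UNIV q4)" for s1
  proof -
    have "norm (integral UNIV (\<lambda>t. f s1 t - g s1 t))
        \<le> integral UNIV (\<lambda>t. q1 s1 * (case t of (s3, s4) \<Rightarrow> q3 s3 * q4 s4))"
      using inner by (intro integral_norm_bound_integral integrable_diff fg integrable_on_mult_right q34(1))
         (auto simp: f_def g_def split_def mult_ac)
    then show ?thesis
      using q34(2) by (simp add: integral_diff[OF fg])
  qed
  then have "norm (integral UNIV (\<lambda>s1. integral UNIV (f s1) - integral UNIV (g s1)))
      \<le> integral UNIV (\<lambda>s1. q1 s1 * (integral UNIV q3 * integral UNIV q4))"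
    using IF(4) IG(4) q1(1)
    by (intro integral_norm_bound_integral integrable_diff integrable_on_mult_left)
       (auto simp: f_def g_def split_def)
  moreover have "integral UNIV F - integral UNIV G
      = integral UNIV (\<lambda>s1. integral UNIV (f s1) - integral UNIV (g s1))"
    using IF(4,5) IG(4,5) by (simp add: integral_diff f_def g_def split_def)
  ultimately show ?thesis
    by (simp add: mult_ac)
qed

section \<open>Gaussian densities\<close>

lemma continuous_on_normal_density: "\<sigma> > 0 \<Longrightarrow> continuous_on UNIV (normal_density \<mu> \<sigma>)"
  unfolding normal_density_def[abs_def] by (intro continuous_intros) auto

lemma integrable_on_normal_density: "\<sigma> > 0 \<Longrightarrow> normal_density \<mu> \<sigma> integrable_on UNIV"
  by (rule integrable_on_lborel) (rule integrable_normal_density)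

lemma integral_normal_density_UNIV: "\<sigma> > 0 \<Longrightarrow> integral UNIV (normal_density \<mu> \<sigma>) = 1"
  by (subst integral_lborel) (simp_all add: integrable_normal_density integral_normal_density)

lemma normal_abs_moment_1_UNIV:
  assumes "\<sigma> > 0"
  shows "(\<lambda>x. normal_density \<mu> \<sigma> x * \<bar>x - \<mu>\<bar>) integrable_on UNIV"
    and "integral UNIV (\<lambda>x. normal_density \<mu> \<sigma> x * \<bar>x - \<mu>\<bar>) = sqrt (2 / pi) * \<sigma>"
proof -
  have "has_bochner_integral lborel (\<lambda>x. normal_density \<mu> \<sigma> x * \<bar>x - \<mu>\<bar>) (sqrt (2 / pi) * \<sigma>)"
    using normal_moment_abs_odd[OF assms, of \<mu> 0] by (simp add: mult.commute)
  then show "(\<lambda>x. normal_density \<mu> \<sigma> x * \<bar>x - \<mu>\<bar>) integrable_on UNIV"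
    and "integral UNIV (\<lambda>x. normal_density \<mu> \<sigma> x * \<bar>x - \<mu>\<bar>) = sqrt (2 / pi) * \<sigma>"
    by (auto simp: integral_lborel has_bochner_integral_iff intro: integrable_on_lborel)
qed

lemma normal_moment_2_UNIV:
  assumes "\<sigma> > 0"
  shows "(\<lambda>x. normal_density \<mu> \<sigma> x * (x - \<mu>)\<^sup>2) integrable_on UNIV"
    and "integral UNIV (\<lambda>x. normal_density \<mu> \<sigma> x * (x - \<mu>)\<^sup>2) = \<sigma>\<^sup>2"
proof -
  have "has_bochner_integral lborel (\<lambda>x. normal_density \<mu> \<sigma> x * (x - \<mu>)\<^sup>2) (\<sigma>\<^sup>2)"
    using normal_moment_even[OF assms, of \<mu> 1] assms by (simp add: power2_eq_square)
  then show "(\<lambda>x. normal_density \<mu> \<sigma> x * (x - \<mu>)\<^sup>2) integrable_on UNIV"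
    and "integral UNIV (\<lambda>x. normal_density \<mu> \<sigma> x * (x - \<mu>)\<^sup>2) = \<sigma>\<^sup>2"
    by (auto simp: integral_lborel has_bochner_integral_iff intro: integrable_on_lborel)
qed

lemma integral_normal_abs_moment_1_le:
  "\<sigma> > 0 \<Longrightarrow> integral UNIV (\<lambda>x. normal_density \<mu> \<sigma> x * \<bar>x - \<mu>\<bar>) \<le> \<sigma>"
  using normal_abs_moment_1_UNIV(2)[of \<sigma> \<mu>] pi_gt3
  by (simp add: mult_left_le_one_le real_sqrt_le_1_iff)

lemma abs_exp_diff_le: "\<bar>exp (x::real) - exp y\<bar> \<le> \<bar>x - y\<bar> * exp (max x y)"
proof -
  have *: "exp v - exp u \<le> (v - u) * exp v" if "u \<le> v" for u v :: real
    using mult_left_mono[OF exp_ge_add_one_self[of "u - v"], of "exp v"]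
    by (simp add: exp_diff algebra_simps)
  show ?thesis
    using *[of x y] *[of y x] by (cases "x \<le> y") (auto simp: max_def abs_if)
qed

lemma gaussian_exponent_shift_le:
  fixes \<sigma> t u :: real
  assumes "\<sigma> > 0" and "\<bar>t\<bar> \<le> \<sigma>"
  shows "- (u - t)\<^sup>2 / (2 * \<sigma>\<^sup>2) \<le> 1 / 2 - u\<^sup>2 / (4 * \<sigma>\<^sup>2)"
proof -
  have "u\<^sup>2 / 2 - t\<^sup>2 \<le> (u - t)\<^sup>2"
    using zero_le_power2[of "u - 2 * t"] by (simp add: power2_eq_square algebra_simps)
  moreover have "t\<^sup>2 \<le> \<sigma>\<^sup>2"
    using assms by (metis abs_ge_zero power2_abs power_mono)
  ultimately have "u\<^sup>2 / 2 - \<sigma>\<^sup>2 \<le> (u - t)\<^sup>2" by linarith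
  then show ?thesis
    using assms(1) by (simp add: field_simps)
qed

lemma abs_normal_density_shift_le:
  fixes \<sigma> t u :: real
  assumes s: "\<sigma> > 0" and ts: "\<bar>t\<bar> \<le> \<sigma>"
  shows "\<bar>normal_density t \<sigma> u - normal_density 0 \<sigma> u\<bar>
          \<le> 2 * (\<bar>t\<bar> / \<sigma>\<^sup>2) * (2 * \<bar>u\<bar> + \<sigma>) * normal_density 0 (sqrt 2 * \<sigma>) u"
proof -
  define c where "c = 1 / sqrt (2 * pi * \<sigma>\<^sup>2)"
  define X where "X = - (u - t)\<^sup>2 / (2 * \<sigma>\<^sup>2)"
  define Y where "Y = - u\<^sup>2 / (2 * \<sigma>\<^sup>2)"
  define Z where "Z = - u\<^sup>2 / (4 * \<sigma>\<^sup>2)"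
  have "c > 0" unfolding c_def using s by simp
  have wide: "normal_density 0 (sqrt 2 * \<sigma>) u = c / sqrt 2 * exp Z"
  proof -
    have "sqrt (2 * pi * (sqrt 2 * \<sigma>)\<^sup>2) = sqrt 2 * sqrt (2 * pi * \<sigma>\<^sup>2)"
      by (simp add: power_mult_distrib real_sqrt_mult[symmetric] mult_ac)
    then show ?thesis
      by (simp add: normal_density_def c_def Z_def power_mult_distrib)
  qed
  have "X - Y = t * (2 * u - t) / (2 * \<sigma>\<^sup>2)"
    using s by (simp add: X_def Y_def field_simps power2_eq_square)
  then have "\<bar>X - Y\<bar> = \<bar>t\<bar> * \<bar>2 * u - t\<bar> / (2 * \<sigma>\<^sup>2)"
    by (simp add: abs_mult)
  also have "\<dots> \<le> \<bar>t\<bar> * (2 * \<bar>u\<bar> + \<sigma>) / (2 * \<sigma>\<^sup>2)"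
    using ts s by (intro divide_right_mono mult_left_mono) auto
  finally have XY: "\<bar>X - Y\<bar> \<le> \<bar>t\<bar> * (2 * \<bar>u\<bar> + \<sigma>) / (2 * \<sigma>\<^sup>2)" .
  have "X \<le> 1 / 2 + Z"
    using gaussian_exponent_shift_le[OF s ts, of u] by (simp add: X_def Z_def)
  moreover have "Y \<le> Z" and "Z \<le> 0"
    using s by (simp_all add: Y_def Z_def field_simps)
  ultimately have "max X Y \<le> 1 / 2 + Z" by simp
  then have "exp (max X Y) \<le> exp (1 / 2) * exp Z"
    by (simp flip: exp_add)
  also have "\<dots> \<le> 2 * exp Z"
    by (intro mult_right_mono exp_half_le2) auto
  finally have maxXY: "exp (max X Y) \<le> 2 * exp Z" .
  have "normal_density t \<sigma> u = c * exp X" "normal_density 0 \<sigma> u = c * exp Y"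
    by (simp_all add: normal_density_def c_def X_def Y_def)
  then have "\<bar>normal_density t \<sigma> u - normal_density 0 \<sigma> u\<bar> = c * \<bar>exp X - exp Y\<bar>"
    using \<open>c > 0\<close> by (simp add: abs_mult flip: right_diff_distrib)
  also have "\<dots> \<le> c * ((\<bar>t\<bar> * (2 * \<bar>u\<bar> + \<sigma>) / (2 * \<sigma>\<^sup>2)) * (2 * exp Z))"
    using \<open>c > 0\<close> XY maxXY abs_exp_diff_le[of X Y]
    by (intro mult_left_mono order_trans[OF abs_exp_diff_le] mult_mono) auto
  also have "\<dots> = sqrt 2 * (\<bar>t\<bar> / \<sigma>\<^sup>2) * (2 * \<bar>u\<bar> + \<sigma>) * normal_density 0 (sqrt 2 * \<sigma>) u"
    using s unfolding wide by (simp add: field_simps power2_eq_square)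
  also have "\<dots> \<le> 2 * (\<bar>t\<bar> / \<sigma>\<^sup>2) * (2 * \<bar>u\<bar> + \<sigma>) * normal_density 0 (sqrt 2 * \<sigma>) u"
    using s by (intro mult_right_mono) (auto simp: real_sqrt_le_iff[of 2 4, simplified])
  finally show ?thesis .
qed

lemma normal_density_linear_weight:
  assumes s: "\<sigma> > 0" and A: "0 \<le> A" and B: "0 \<le> B"
  shows "(\<lambda>u. normal_density \<mu> \<sigma> u * (A + B * \<bar>u\<bar>)) integrable_on UNIV"
    and "integral UNIV (\<lambda>u. normal_density \<mu> \<sigma> u * (A + B * \<bar>u\<bar>)) \<le> A + B * (\<bar>\<mu>\<bar> + \<sigma>)"
proof -
  define g where "g u = (A + B * \<bar>\<mu>\<bar>) * normal_density \<mu> \<sigma> u + B * (normal_density \<mu> \<sigma> u * \<bar>u - \<mu>\<bar>)" for u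
  have g_int: "g integrable_on UNIV"
    unfolding g_def[abs_def]
    by (intro integrable_add integrable_on_mult_right integrable_on_normal_density normal_abs_moment_1_UNIV s)
  have le_g: "normal_density \<mu> \<sigma> u * (A + B * \<bar>u\<bar>) \<le> g u" for u
  proof -
    have "B * \<bar>u\<bar> \<le> B * (\<bar>\<mu>\<bar> + \<bar>u - \<mu>\<bar>)"
      using B by (intro mult_left_mono) auto
    then have "normal_density \<mu> \<sigma> u * (A + B * \<bar>u\<bar>)
        \<le> normal_density \<mu> \<sigma> u * (A + B * (\<bar>\<mu>\<bar> + \<bar>u - \<mu>\<bar>))"
      by (intro mult_left_mono) auto
    then show ?thesis
      by (simp add: g_def algebra_simps)
  qed
  show int: "(\<lambda>u. normal_density \<mu> \<sigma> u * (A + B * \<bar>u\<bar>)) integrable_on UNIV"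
    using A B le_g
    by (intro integrable_on_UNIV_continuous_dominated[OF _ _ g_int] continuous_intros
        continuous_on_normal_density s) auto
  have "integral UNIV g \<le> (A + B * \<bar>\<mu>\<bar>) + B * \<sigma>"
    unfolding g_def[abs_def] using s B integral_normal_abs_moment_1_le[OF s, of \<mu>]
    by (simp add: integral_add integrable_on_mult_right integrable_on_normal_density
        normal_abs_moment_1_UNIV integral_normal_density_UNIV mult_left_mono)
  then show "integral UNIV (\<lambda>u. normal_density \<mu> \<sigma> u * (A + B * \<bar>u\<bar>)) \<le> A + B * (\<bar>\<mu>\<bar> + \<sigma>)"
    using integral_le[OF int g_int le_g] by (simp add: algebra_simps)
qed

lemma abs_normal_density_shift_weight:
  assumes s: "\<sigma> > 0" and A: "0 \<le> A" and B: "0 \<le> B"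
  shows "(\<lambda>u. \<bar>normal_density t \<sigma> u - normal_density 0 \<sigma> u\<bar> * (A + B * \<bar>u\<bar>)) integrable_on UNIV"
    and "integral UNIV (\<lambda>u. \<bar>normal_density t \<sigma> u - normal_density 0 \<sigma> u\<bar> * (A + B * \<bar>u\<bar>))
      \<le> (A + B * (\<bar>t\<bar> + \<sigma>)) + (A + B * \<sigma>)"
proof -
  note lin = normal_density_linear_weight[OF s A B]
  define \<beta> where "\<beta> u = normal_density t \<sigma> u * (A + B * \<bar>u\<bar>) + normal_density 0 \<sigma> u * (A + B * \<bar>u\<bar>)" for u
  have \<beta>_int: "\<beta> integrable_on UNIV"
    unfolding \<beta>_def[abs_def] by (intro integrable_add lin)
  have le_\<beta>: "\<bar>normal_density t \<sigma> u - normal_density 0 \<sigma> u\<bar> * (A + B * \<bar>u\<bar>) \<le> \<beta> u" for u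
  proof -
    have "\<bar>normal_density t \<sigma> u - normal_density 0 \<sigma> u\<bar> \<le> normal_density t \<sigma> u + normal_density 0 \<sigma> u"
      by (simp add: abs_le_iff add_increasing add_increasing2)
    then show ?thesis
      unfolding \<beta>_def using A B by (simp add: mult_right_mono flip: distrib_right)
  qed
  show int: "(\<lambda>u. \<bar>normal_density t \<sigma> u - normal_density 0 \<sigma> u\<bar> * (A + B * \<bar>u\<bar>)) integrable_on UNIV"
    using le_\<beta> A B
    by (intro integrable_on_UNIV_continuous_dominated[OF _ _ \<beta>_int] continuous_intros
        continuous_on_normal_density s) auto
  have "integral UNIV \<beta> \<le> (A + B * (\<bar>t\<bar> + \<sigma>)) + (A + B * \<sigma>)"
    unfolding \<beta>_def[abs_def] using lin(2)[of t] lin(2)[of 0]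
    by (simp add: integral_add lin(1))
  then show "integral UNIV (\<lambda>u. \<bar>normal_density t \<sigma> u - normal_density 0 \<sigma> u\<bar> * (A + B * \<bar>u\<bar>))
      \<le> (A + B * (\<bar>t\<bar> + \<sigma>)) + (A + B * \<sigma>)"
    using integral_le[OF int \<beta>_int le_\<beta>] by linarith
qed

lemma integral_abs_normal_density_small_shift_le:
  assumes s: "\<sigma> > 0" and A: "0 \<le> A" and B: "0 \<le> B" and small: "\<bar>t\<bar> \<le> \<sigma>"
  shows "integral UNIV (\<lambda>u. \<bar>normal_density t \<sigma> u - normal_density 0 \<sigma> u\<bar> * (A + B * \<bar>u\<bar>))
    \<le> (\<bar>t\<bar> / \<sigma>) * (8 * A + 11 * B * \<sigma>)"
proof -
  define \<sigma>' where "\<sigma>' = sqrt 2 * \<sigma>"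
  have "\<sigma>' > 0" using s by (simp add: \<sigma>'_def)
  define \<phi> where "\<phi> = normal_density 0 \<sigma>'"
  define \<beta> where "\<beta> u = 2 * (\<bar>t\<bar> / \<sigma>\<^sup>2) * (A * \<sigma> * \<phi> u + (2 * A + B * \<sigma>) * (\<phi> u * \<bar>u\<bar>)
    + 2 * B * (\<phi> u * u\<^sup>2))" for u
  have moments: "\<phi> integrable_on UNIV" "integral UNIV \<phi> = 1"
    "(\<lambda>u. \<phi> u * \<bar>u\<bar>) integrable_on UNIV" "integral UNIV (\<lambda>u. \<phi> u * \<bar>u\<bar>) \<le> \<sigma>'"
    "(\<lambda>u. \<phi> u * u\<^sup>2) integrable_on UNIV" "integral UNIV (\<lambda>u. \<phi> u * u\<^sup>2) = \<sigma>'\<^sup>2"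
    unfolding \<phi>_def
    using integrable_on_normal_density[OF \<open>\<sigma>' > 0\<close>] integral_normal_density_UNIV[OF \<open>\<sigma>' > 0\<close>]
      normal_abs_moment_1_UNIV(1)[OF \<open>\<sigma>' > 0\<close>, of 0] integral_normal_abs_moment_1_le[OF \<open>\<sigma>' > 0\<close>, of 0]
      normal_moment_2_UNIV[OF \<open>\<sigma>' > 0\<close>, of 0]
    by simp_all
  have \<beta>_int: "\<beta> integrable_on UNIV"
    unfolding \<beta>_def[abs_def] by (intro integrable_on_mult_right integrable_add moments)
  have "\<bar>normal_density t \<sigma> u - normal_density 0 \<sigma> u\<bar> * (A + B * \<bar>u\<bar>) \<le> \<beta> u" for u
  proof -
    have "\<bar>normal_density t \<sigma> u - normal_density 0 \<sigma> u\<bar> * (A + B * \<bar>u\<bar>)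
        \<le> (2 * (\<bar>t\<bar> / \<sigma>\<^sup>2) * (2 * \<bar>u\<bar> + \<sigma>) * \<phi> u) * (A + B * \<bar>u\<bar>)"
      unfolding \<phi>_def \<sigma>'_def using A B abs_normal_density_shift_le[OF s small]
      by (intro mult_right_mono) auto
    also have "\<dots> = \<beta> u"
    proof -
      have "\<bar>u\<bar> * (\<bar>u\<bar> * c) = u * (u * c)" for c
        by (metis abs_mult_self_eq mult.assoc)
      then show ?thesis
        using s by (simp add: \<beta>_def field_simps power2_eq_square)
    qed
    finally show ?thesis .
  qed
  then have "integral UNIV (\<lambda>u. \<bar>normal_density t \<sigma> u - normal_density 0 \<sigma> u\<bar> * (A + B * \<bar>u\<bar>))
      \<le> integral UNIV \<beta>"
    by (intro integral_le abs_normal_density_shift_weight(1)[OF s A B] \<beta>_int)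
  also have "\<dots> = 2 * (\<bar>t\<bar> / \<sigma>\<^sup>2) * (A * \<sigma> + (2 * A + B * \<sigma>)
      * integral UNIV (\<lambda>u. \<phi> u * \<bar>u\<bar>) + 2 * B * \<sigma>'\<^sup>2)"
    unfolding \<beta>_def[abs_def]
    by (simp add: integral_add integrable_add integrable_on_mult_right moments integral_mult_right)
  also have "\<dots> \<le> 2 * (\<bar>t\<bar> / \<sigma>\<^sup>2) * (A * \<sigma> + (2 * A + B * \<sigma>) * (3 / 2 * \<sigma>) + 2 * B * (2 * \<sigma>\<^sup>2))"
  proof -
    note moments(4)
    also have "\<sigma>' \<le> 3 / 2 * \<sigma>"
      unfolding \<sigma>'_def using s by (intro mult_right_mono real_le_lsqrt) (auto simp: power2_eq_square)
    finally show ?thesis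
      using A B s by (intro mult_left_mono add_mono) (auto simp: \<sigma>'_def power_mult_distrib)
  qed
  also have "\<dots> = (\<bar>t\<bar> / \<sigma>) * (8 * A + 11 * B * \<sigma>)"
    using s by (simp add: field_simps power2_eq_square)
  finally show ?thesis .
qed

lemma integral_abs_normal_density_shift_le:
  assumes s: "\<sigma> > 0" and A: "0 \<le> A" and B: "0 \<le> B"
  shows "integral UNIV (\<lambda>u. \<bar>normal_density t \<sigma> u - normal_density 0 \<sigma> u\<bar> * (A + B * \<bar>u\<bar>))
    \<le> 12 * (\<bar>t\<bar> / \<sigma>) * (A + B * \<sigma>)"
proof (cases "\<bar>t\<bar> \<le> \<sigma>")
  case True
  have "(\<bar>t\<bar> / \<sigma>) * (8 * A + 11 * B * \<sigma>) \<le> (\<bar>t\<bar> / \<sigma>) * (12 * (A + B * \<sigma>))"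
    using A B s by (intro mult_left_mono) auto
  then show ?thesis
    using integral_abs_normal_density_small_shift_le[OF s A B True] by (simp only: mult_ac)
next
  case False
  define r where "r = \<bar>t\<bar> / \<sigma>"
  have "1 \<le> r" using False s by (simp add: r_def)
  have "(A + B * (\<bar>t\<bar> + \<sigma>)) + (A + B * \<sigma>) = 2 * A + (r + 2) * (B * \<sigma>)"
    using s by (simp add: r_def algebra_simps)
  also have "\<dots> \<le> 12 * r * A + 12 * r * (B * \<sigma>)"
    using \<open>1 \<le> r\<close> A B s by (intro add_mono mult_right_mono) auto
  finally show ?thesis
    using abs_normal_density_shift_weight(2)[OF s A B, of t]
    by (simp add: r_def distrib_left)
qed

lemma norm_integral_normal_shift_le:
  fixes K :: "real \<Rightarrow> 'e::banach"
  assumes s: "\<sigma> > 0" and K: "continuous_on UNIV K" and A: "0 \<le> A" and B: "0 \<le> B"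
    and K_growth: "\<And>w. norm (K w - K 0) \<le> A + B * \<bar>w\<bar>"
  shows "norm (integral UNIV (\<lambda>w. normal_density 0 \<sigma> w *\<^sub>R K (w + t))
      - integral UNIV (\<lambda>w. normal_density 0 \<sigma> w *\<^sub>R K w)) \<le> 12 * (\<bar>t\<bar> / \<sigma>) * (A + B * \<sigma>)"
proof -
  have K_int: "(\<lambda>u. normal_density \<mu> \<sigma> u *\<^sub>R K u) integrable_on UNIV" for \<mu>
  proof (rule integrable_on_UNIV_continuous_dominated)
    show "norm (normal_density \<mu> \<sigma> u *\<^sub>R K u) \<le> normal_density \<mu> \<sigma> u * ((norm (K 0) + A) + B * \<bar>u\<bar>)" for u
      using norm_triangle_sub[of "K u" "K 0"] K_growth[of u] by (simp add: mult_left_mono)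
    show "(\<lambda>u. normal_density \<mu> \<sigma> u * ((norm (K 0) + A) + B * \<bar>u\<bar>)) integrable_on UNIV"
      by (rule normal_density_linear_weight(1)[OF s _ B]) (use A in simp)
  qed (intro continuous_on_scaleR continuous_on_normal_density s K)
  have const_int: "(\<lambda>u. normal_density \<mu> \<sigma> u *\<^sub>R K 0) integrable_on UNIV"
    and const: "integral UNIV (\<lambda>u. normal_density \<mu> \<sigma> u *\<^sub>R K 0) = K 0" for \<mu>
    using has_integral_scaleR_left[OF integrable_integral[OF integrable_on_normal_density[OF s]], where c = "K 0"]
    by (auto simp: integral_normal_density_UNIV[OF s] integrable_on_def integral_unique)
  define D where "D u = (normal_density t \<sigma> u - normal_density 0 \<sigma> u) *\<^sub>R (K u - K 0)" for u
  have D_eq: "D = (\<lambda>u. (normal_density t \<sigma> u *\<^sub>R K u - normal_density t \<sigma> u *\<^sub>R K 0)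
      - (normal_density 0 \<sigma> u *\<^sub>R K u - normal_density 0 \<sigma> u *\<^sub>R K 0))"
    by (auto simp: D_def algebra_simps)
  have D_int: "D integrable_on UNIV"
    unfolding D_eq by (intro integrable_diff K_int const_int)
  have "integral UNIV (\<lambda>w. normal_density 0 \<sigma> w *\<^sub>R K (w + t))
      = integral UNIV (\<lambda>u. normal_density t \<sigma> u *\<^sub>R K u)"
    using has_integral_UNIV_translate[OF integrable_integral[OF K_int[of t]], of t]
    by (simp add: normal_density_def integral_unique)
  also have "\<dots> = integral UNIV (\<lambda>w. normal_density 0 \<sigma> w *\<^sub>R K w) + integral UNIV D"
    unfolding D_eq by (simp add: integral_diff integrable_diff K_int const_int const)
  finally have "norm (integral UNIV (\<lambda>w. normal_density 0 \<sigma> w *\<^sub>R K (w + t))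
      - integral UNIV (\<lambda>w. normal_density 0 \<sigma> w *\<^sub>R K w)) = norm (integral UNIV D)"
    by simp
  also have "\<dots> \<le> integral UNIV (\<lambda>u. \<bar>normal_density t \<sigma> u - normal_density 0 \<sigma> u\<bar> * (A + B * \<bar>u\<bar>))"
  proof (rule integral_norm_bound_integral)
    show "D integrable_on UNIV" by (rule D_int)
    show "norm (D u) \<le> \<bar>normal_density t \<sigma> u - normal_density 0 \<sigma> u\<bar> * (A + B * \<bar>u\<bar>)" for u
      unfolding D_def by (simp add: mult_left_mono K_growth)
  qed (rule abs_normal_density_shift_weight(1)[OF s A B])
  also have "\<dots> \<le> 12 * (\<bar>t\<bar> / \<sigma>) * (A + B * \<sigma>)"
    by (rule integral_abs_normal_density_shift_le[OF s A B])
  finally show ?thesis .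
qed

lemma integrable_lborel_normal_density_poly:
  assumes "\<sigma> > 0"
  shows "integrable lborel (\<lambda>t. normal_density 0 \<sigma> t * (A + B * \<bar>t\<bar> + C * t\<^sup>2))"
proof -
  have "integrable lborel (\<lambda>t. A * normal_density 0 \<sigma> t + B * (normal_density 0 \<sigma> t * \<bar>t - 0\<bar> ^ 1)
      + C * (normal_density 0 \<sigma> t * \<bar>t - 0\<bar> ^ 2))"
    using assms by (intro Bochner_Integration.integrable_add Bochner_Integration.integrable_mult_right
        integrable_normal_density integrable_normal_moment_abs)
  then show ?thesis by (simp add: algebra_simps)
qed

lemma integrable_weight_gdens_poly:
  assumes "0 \<le> A" "0 \<le> B" "0 \<le> C"
  shows "integrable_weight (\<lambda>t. gdens s t * (A + B * \<bar>t\<bar> + C * t\<^sup>2))"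
  unfolding integrable_weight_def gdens_def using assms
  by (auto intro!: continuous_intros continuous_on_normal_density integrable_lborel_normal_density_poly)

lemma integral_gdens_poly:
  "integral UNIV (\<lambda>t. gdens s t * (A + B * \<bar>t\<bar> + C * t\<^sup>2))
    = A + B * (sqrt (2 / pi) * exp s) + C * (exp s)\<^sup>2"
proof -
  have "exp s > 0" by simp
  have "has_bochner_integral lborel (normal_density 0 (exp s)) 1"
    using integrable_normal_density[OF \<open>exp s > 0\<close>, of 0] integral_normal_density[OF \<open>exp s > 0\<close>, of 0]
    by (simp add: has_bochner_integral_iff)
  moreover have "has_bochner_integral lborel (\<lambda>t. normal_density 0 (exp s) t * \<bar>t\<bar>) (sqrt (2 / pi) * exp s)"
    using normal_moment_abs_odd[OF \<open>exp s > 0\<close>, of 0 0] by (simp add: mult.commute)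
  moreover have "has_bochner_integral lborel (\<lambda>t. normal_density 0 (exp s) t * t\<^sup>2) ((exp s)\<^sup>2)"
    using normal_moment_even[OF \<open>exp s > 0\<close>, of 0 1] by (simp add: power2_eq_square)
  ultimately have "has_bochner_integral lborel (\<lambda>t. A * normal_density 0 (exp s) t
      + B * (normal_density 0 (exp s) t * \<bar>t\<bar>) + C * (normal_density 0 (exp s) t * t\<^sup>2))
      (A * 1 + B * (sqrt (2 / pi) * exp s) + C * (exp s)\<^sup>2)"
    by (intro has_bochner_integral_add has_bochner_integral_mult_right)
  then show ?thesis
    by (subst integral_lborel) (auto simp: gdens_def algebra_simps has_bochner_integral_iff)
qed

lemma gdens_nonneg: "0 \<le> gdens s t"
  by (simp add: gdens_def)

lemma gdens_weight:
  "integrable_weight (gdens s)" "integral UNIV (gdens s) = 1"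
  using integrable_weight_gdens_poly[of 1 0 0 s] integral_gdens_poly[of s 1 0 0] by simp_all

lemma gdens_square_weight:
  "integrable_weight (\<lambda>t. gdens s t * (1 + t\<^sup>2))"
  using integrable_weight_gdens_poly[of 1 0 1 s] by simp

lemma gdens_abs_weight:
  "integrable_weight (\<lambda>t. gdens s t * (1 + \<bar>t\<bar> / exp s))"
  "integral UNIV (\<lambda>t. gdens s t * (1 + \<bar>t\<bar> / exp s)) \<le> 2"
  "0 \<le> integral UNIV (\<lambda>t. gdens s t * (1 + \<bar>t\<bar> / exp s))"
proof -
  have eq: "(\<lambda>t. gdens s t * (1 + \<bar>t\<bar> / exp s)) = (\<lambda>t. gdens s t * (1 + 1 / exp s * \<bar>t\<bar> + 0 * t\<^sup>2))"
    by simp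
  show "integrable_weight (\<lambda>t. gdens s t * (1 + \<bar>t\<bar> / exp s))"
    unfolding eq by (rule integrable_weight_gdens_poly) simp_all
  have "sqrt (2 / pi) \<le> 1"
    using pi_gt3 by (simp add: real_sqrt_le_1_iff)
  then show "integral UNIV (\<lambda>t. gdens s t * (1 + \<bar>t\<bar> / exp s)) \<le> 2"
    unfolding eq integral_gdens_poly by simp
  show "0 \<le> integral UNIV (\<lambda>t. gdens s t * (1 + \<bar>t\<bar> / exp s))"
    unfolding eq integral_gdens_poly by simp
qed

lemma gdens_scaled_square_weight:
  "integrable_weight (\<lambda>t. gdens s t * (1 + (t / exp s)\<^sup>2))"
  "integral UNIV (\<lambda>t. gdens s t * (1 + (t / exp s)\<^sup>2)) = 2"
proof -
  have eq: "(\<lambda>t. gdens s t * (1 + (t / exp s)\<^sup>2)) = (\<lambda>t. gdens s t * (1 + 0 * \<bar>t\<bar> + 1 / (exp s)\<^sup>2 * t\<^sup>2))"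
    by (simp add: power_divide)
  show "integrable_weight (\<lambda>t. gdens s t * (1 + (t / exp s)\<^sup>2))"
    unfolding eq by (rule integrable_weight_gdens_poly) simp_all
  show "integral UNIV (\<lambda>t. gdens s t * (1 + (t / exp s)\<^sup>2)) = 2"
    unfolding eq integral_gdens_poly by simp
qed

lemma one_le_mult_real: "1 \<le> a \<Longrightarrow> 1 \<le> b \<Longrightarrow> 1 \<le> a * (b::real)"
  using mult_mono[of 1 a 1 b] by simp

lemma le_mult_one_le: "0 \<le> a \<Longrightarrow> 1 \<le> b \<Longrightarrow> a \<le> a * (b::real)"
  using mult_left_mono[of 1 b a] by simp

lemma abs_le_one_plus_square: "\<bar>t\<bar> \<le> 1 + (t::real)\<^sup>2"
  using zero_le_power2[of "\<bar>t\<bar> - 1"] by (simp add: power2_diff)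

lemma one_le_prod_squares: "1 \<le> (1 + a\<^sup>2) * (1 + b\<^sup>2) * (1 + c\<^sup>2) * (1 + (d::real)\<^sup>2)"
  by (intro one_le_mult_real) simp_all

lemma sum_le_4_prod:
  fixes u1 u2 u3 u4 :: real
  assumes "1 \<le> u1" "1 \<le> u2" "1 \<le> u3" "1 \<le> u4"
  shows "u1 + u2 + u3 + u4 \<le> 4 * (u1 * u2 * u3 * u4)"
proof -
  have "u1 \<le> u1 * (u2 * u3 * u4)" "u2 \<le> u2 * (u1 * u3 * u4)"
    "u3 \<le> u3 * (u1 * u2 * u4)" "u4 \<le> u4 * (u1 * u2 * u3)"
    using assms by (intro le_mult_one_le one_le_mult_real; simp)+
  then show ?thesis by (simp add: mult_ac)
qed

lemma polynomial_le_prod: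
  fixes y w z x :: real
  shows "\<bar>y\<bar> + \<bar>w\<bar> + \<bar>z\<bar> + \<bar>x\<bar> + \<bar>x\<bar> * \<bar>y\<bar> + 2 * \<bar>x\<bar> * \<bar>w\<bar> + x\<^sup>2 * \<bar>y\<bar>
    \<le> 8 * ((1 + y\<^sup>2) * (1 + w\<^sup>2) * (1 + z\<^sup>2) * (1 + x\<^sup>2))"
proof -
  define Y W Z X where "Y = 1 + y\<^sup>2" and "W = 1 + w\<^sup>2" and "Z = 1 + z\<^sup>2" and "X = 1 + x\<^sup>2"
  have ge1: "1 \<le> Y" "1 \<le> W" "1 \<le> Z" "1 \<le> X" by (simp_all add: Y_def W_def Z_def X_def)
  have le: "\<bar>y\<bar> \<le> Y" "\<bar>w\<bar> \<le> W" "\<bar>z\<bar> \<le> Z" "\<bar>x\<bar> \<le> X" "x\<^sup>2 \<le> X"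
    by (simp_all add: Y_def W_def Z_def X_def abs_le_one_plus_square)
  define P where "P = Y * W * Z * X"
  have "X * Y \<le> (X * Y) * (W * Z)" "X * W \<le> (X * W) * (Y * Z)"
    using ge1 by (intro le_mult_one_le one_le_mult_real; simp)+
  moreover have "Y \<le> Y * (W * Z * X)" "W \<le> W * (Y * Z * X)" "Z \<le> Z * (Y * W * X)" "X \<le> X * (Y * W * Z)"
    using ge1 by (intro le_mult_one_le one_le_mult_real; simp)+
  ultimately have prod: "X * Y \<le> P" "X * W \<le> P" "Y \<le> P" "W \<le> P" "Z \<le> P" "X \<le> P"
    by (simp_all add: P_def mult_ac)
  have "\<bar>x\<bar> * \<bar>y\<bar> \<le> X * Y" "\<bar>x\<bar> * \<bar>w\<bar> \<le> X * W" "x\<^sup>2 * \<bar>y\<bar> \<le> X * Y"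
    using le by (auto intro: mult_mono)
  with le prod have "\<bar>y\<bar> + \<bar>w\<bar> + \<bar>z\<bar> + \<bar>x\<bar> + \<bar>x\<bar> * \<bar>y\<bar> + 2 * \<bar>x\<bar> * \<bar>w\<bar> + x\<^sup>2 * \<bar>y\<bar> \<le> 8 * P"
    by linarith
  then show ?thesis
    by (simp only: P_def Y_def W_def Z_def X_def)
qed

lemma Z_shift_bound:
  fixes x y w sa sb sc sd :: real
  assumes pos: "sa > 0" "sb > 0" "sc > 0" "sd > 0" and small: "sa * sd / sb \<le> 1"
  shows "\<bar>2 * x * w + x\<^sup>2 * y\<bar> / sc
    \<le> 3 * (sb * sd / sc) * ((1 + (x / sd)\<^sup>2) * (1 + \<bar>y\<bar> / sa) * (1 + \<bar>w\<bar> / sb))"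
proof -
  define u p q where "u = \<bar>x\<bar> / sd" and "p = \<bar>y\<bar> / sa" and "q = \<bar>w\<bar> / sb"
  have nonneg: "0 \<le> u" "0 \<le> p" "0 \<le> q" using pos by (simp_all add: u_def p_def q_def)
  have "\<bar>2 * x * w + x\<^sup>2 * y\<bar> \<le> 2 * \<bar>x\<bar> * \<bar>w\<bar> + \<bar>x\<bar>\<^sup>2 * \<bar>y\<bar>"
    using abs_triangle_ineq[of "2 * x * w" "x\<^sup>2 * y"] by (simp add: abs_mult)
  also have "\<dots> = (sb * sd) * (2 * u * q) + (sb * sd) * ((sa * sd / sb) * (u\<^sup>2 * p))"
    using pos by (simp add: u_def p_def q_def field_simps power2_eq_square)
  also have "\<dots> \<le> (sb * sd) * (2 * u * q) + (sb * sd) * (u\<^sup>2 * p)"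
    using mult_right_mono[OF small, of "u\<^sup>2 * p"] pos nonneg
    by (intro add_left_mono mult_left_mono) auto
  also have "\<dots> = (sb * sd) * (2 * u * q + u\<^sup>2 * p)"
    by (simp only: distrib_left)
  also have "\<dots> \<le> (sb * sd) * (3 * ((1 + u\<^sup>2) * (1 + p) * (1 + q)))"
  proof -
    have "u * q \<le> (1 + u\<^sup>2) * (1 + q)"
      using abs_le_one_plus_square[of u] nonneg by (intro mult_mono) auto
    also have "\<dots> \<le> (1 + u\<^sup>2) * (1 + p) * (1 + q)"
      using nonneg le_mult_one_le[of "(1 + u\<^sup>2) * (1 + q)" "1 + p"] by (simp add: mult_ac)
    finally have "u * q \<le> (1 + u\<^sup>2) * (1 + p) * (1 + q)" .
    moreover have "u\<^sup>2 * p \<le> (1 + u\<^sup>2) * (1 + p)"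
      using nonneg by (intro mult_mono) auto
    then have "u\<^sup>2 * p \<le> (1 + u\<^sup>2) * (1 + p) * (1 + q)"
      using nonneg le_mult_one_le[of "(1 + u\<^sup>2) * (1 + p)" "1 + q"] by simp
    ultimately show ?thesis
      using pos by (intro mult_left_mono) auto
  qed
  finally have "\<bar>2 * x * w + x\<^sup>2 * y\<bar> / sc \<le> (sb * sd) * (3 * ((1 + u\<^sup>2) * (1 + p) * (1 + q))) / sc"
    using pos by (intro divide_right_mono) auto
  also have "\<dots> = 3 * (sb * sd / sc) * ((1 + (x / sd)\<^sup>2) * (1 + \<bar>y\<bar> / sa) * (1 + \<bar>w\<bar> / sb))"
    by (simp add: u_def p_def q_def power_divide)
  finally show ?thesis .
qed

lemma W_shift_bound:
  fixes x y sa sb sc sd :: real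
  assumes pos: "sa > 0" "sb > 0" "sc > 0" "sd > 0" and small: "sb * sd / sc \<le> 1"
  shows "(\<bar>x\<bar> * \<bar>y\<bar> / sb) * (3 + 2 * \<bar>x\<bar> * sb / sc)
    \<le> 5 * (sa * sd / sb) * ((1 + (x / sd)\<^sup>2) * (1 + \<bar>y\<bar> / sa))"
proof -
  define u p where "u = \<bar>x\<bar> / sd" and "p = \<bar>y\<bar> / sa"
  have nonneg: "0 \<le> u" "0 \<le> p" using pos by (simp_all add: u_def p_def)
  have "2 * \<bar>x\<bar> * sb / sc = 2 * (sb * sd / sc) * u"
    using pos by (simp add: u_def field_simps)
  also have "\<dots> \<le> 2 * u"
    using small nonneg mult_right_mono[OF small, of u] by simp
  finally have "(\<bar>x\<bar> * \<bar>y\<bar> / sb) * (3 + 2 * \<bar>x\<bar> * sb / sc) \<le> (sa * sd / sb) * (u * p) * (3 + 2 * u)"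
    using pos nonneg by (intro mult_mono) (auto simp: u_def p_def field_simps)
  also have "\<dots> = (sa * sd / sb) * (p * (3 * u + 2 * u\<^sup>2))"
    unfolding power2_eq_square by (simp only: distrib_left distrib_right mult_ac)
  also have "\<dots> \<le> (sa * sd / sb) * ((1 + p) * (5 * (1 + u\<^sup>2)))"
  proof -
    have "3 * u + 2 * u\<^sup>2 \<le> 5 * (1 + u\<^sup>2)"
      using abs_le_one_plus_square[of u] nonneg by simp
    then show ?thesis
      using pos nonneg by (intro mult_left_mono mult_mono) auto
  qed
  finally show ?thesis
    by (simp add: u_def p_def power_divide mult_ac)
qed

section \<open>The group \<open>H\<close> and its affine isometric actions\<close>

lemma one_param_hom:
  "hmult (hY s) (hY t) = hY (s + t)" "hmult (hW s) (hW t) = hW (s + t)"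
  "hmult (hZ s) (hZ t) = hZ (s + t)" "hmult (hX s) (hX t) = hX (s + t)"
  by (simp_all add: hmult_def hY_def hW_def hZ_def hX_def)

lemma one_param_zero: "hY 0 = hone" "hW 0 = hone" "hZ 0 = hone" "hX 0 = hone"
  by (simp_all add: hY_def hW_def hZ_def hX_def hone_def)

lemma continuous_on_one_param:
  "continuous_on UNIV hY" "continuous_on UNIV hW" "continuous_on UNIV hZ" "continuous_on UNIV hX"
  unfolding hY_def[abs_def] hW_def[abs_def] hZ_def[abs_def] hX_def[abs_def]
  by (intro continuous_intros)+

lemma hmult_YWZX: "hmult (hY y) (hmult (hW w) (hmult (hZ z) (hX x))) = (y, w, z, x)"
  by (simp add: hmult_def hY_def hW_def hZ_def hX_def)

lemma hmult_XZWY: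
  "hmult (hX x) (hmult (hZ z) (hmult (hW w) (hY y))) = (y, w + x * y, z + 2 * x * w + x\<^sup>2 * y, x)"
  by (simp add: hmult_def hY_def hW_def hZ_def hX_def)

lemma hmult_right_hZ: "hmult (y, w, 0, x) (hZ z) = (y, w, z, x)"
  by (simp add: hmult_def hZ_def)

lemma hmult_right_hW_hZ: "hmult (y, 0, z, x) (hmult (hW w) (hZ (- (2 * x * w)))) = (y, w, z, x)"
  by (simp add: hmult_def hW_def hZ_def)

lemma norm_H_le: "norm ((y, w, z, x) :: H) \<le> \<bar>y\<bar> + \<bar>w\<bar> + \<bar>z\<bar> + \<bar>x\<bar>"
  using norm_Pair_le[of y "(w, z, x)"] norm_Pair_le[of w "(z, x)"] norm_Pair_le[of z x] by simp

lemma norm_H_le_prod: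
  fixes y w z x :: real
  shows "norm (y, w, z, x) \<le> 8 * ((1 + y\<^sup>2) * (1 + w\<^sup>2) * (1 + z\<^sup>2) * (1 + x\<^sup>2))"
    and "norm (y, w + x * y, z, x) \<le> 8 * ((1 + y\<^sup>2) * (1 + w\<^sup>2) * (1 + z\<^sup>2) * (1 + x\<^sup>2))"
    and "norm (y, w + x * y, z + 2 * x * w + x\<^sup>2 * y, x)
      \<le> 8 * ((1 + y\<^sup>2) * (1 + w\<^sup>2) * (1 + z\<^sup>2) * (1 + x\<^sup>2))"
proof -
  have "\<bar>w + x * y\<bar> \<le> \<bar>w\<bar> + \<bar>x\<bar> * \<bar>y\<bar>"
    using abs_triangle_ineq[of w "x * y"] by (simp add: abs_mult)
  moreover have "\<bar>z + 2 * x * w + x\<^sup>2 * y\<bar> \<le> \<bar>z\<bar> + 2 * \<bar>x\<bar> * \<bar>w\<bar> + x\<^sup>2 * \<bar>y\<bar>"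
    using abs_triangle_ineq[of "z + 2 * x * w" "x\<^sup>2 * y"] abs_triangle_ineq[of z "2 * x * w"]
    by (simp add: abs_mult)
  moreover have "0 \<le> \<bar>x\<bar> * \<bar>y\<bar>" "0 \<le> \<bar>x\<bar> * \<bar>w\<bar>" "0 \<le> x\<^sup>2 * \<bar>y\<bar>"
    by simp_all
  ultimately show "norm (y, w, z, x) \<le> 8 * ((1 + y\<^sup>2) * (1 + w\<^sup>2) * (1 + z\<^sup>2) * (1 + x\<^sup>2))"
    and "norm (y, w + x * y, z, x) \<le> 8 * ((1 + y\<^sup>2) * (1 + w\<^sup>2) * (1 + z\<^sup>2) * (1 + x\<^sup>2))"
    and "norm (y, w + x * y, z + 2 * x * w + x\<^sup>2 * y, x)
      \<le> 8 * ((1 + y\<^sup>2) * (1 + w\<^sup>2) * (1 + z\<^sup>2) * (1 + x\<^sup>2))"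
    using norm_H_le[of y w z x] norm_H_le[of y "w + x * y" z x]
      norm_H_le[of y "w + x * y" "z + 2 * x * w + x\<^sup>2 * y" x] polynomial_le_prod[of y w z x]
    by linarith+
qed

definition moderate_growth :: "(real \<times> real \<times> real \<times> real \<Rightarrow> H) \<Rightarrow> bool" where
  "moderate_growth \<Phi> \<longleftrightarrow> continuous_on UNIV \<Phi> \<and> (\<forall>s1 s2 s3 s4.
     norm (\<Phi> (s1, s2, s3, s4)) \<le> 8 * ((1 + s1\<^sup>2) * (1 + s2\<^sup>2) * (1 + s3\<^sup>2) * (1 + s4\<^sup>2)))"

lemma moderate_growth_hone: "moderate_growth (\<lambda>_. hone)"
  by (simp add: moderate_growth_def hone_def)

lemma moderate_growth_id: "moderate_growth (\<lambda>\<sigma>. \<sigma>)"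
  using norm_H_le_prod(1) by (simp add: moderate_growth_def continuous_on_id)

lemma moderate_growth_shear: "moderate_growth (\<lambda>(y, w, z, x). (y, w + x * y, z, x))"
  using norm_H_le_prod(2)
  unfolding moderate_growth_def split_def by (simp add: continuous_intros)

lemma moderate_growth_shear_rev: "moderate_growth (\<lambda>(x, z, w, y). (y, w + x * y, z, x))"
proof -
  have "norm (y, w + x * y, z, x) \<le> 8 * ((1 + x\<^sup>2) * (1 + z\<^sup>2) * (1 + w\<^sup>2) * (1 + y\<^sup>2))" for x z w y
    using norm_H_le_prod(2)[of y w x z] by (simp add: mult_ac)
  then show ?thesis
    unfolding moderate_growth_def split_def by (simp add: continuous_intros)
qed

lemma moderate_growth_XZWY:
  "moderate_growth (\<lambda>(x, z, w, y). hmult (hX x) (hmult (hZ z) (hmult (hW w) (hY y))))"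
proof -
  have "norm (y, w + x * y, z + 2 * x * w + x\<^sup>2 * y, x)
      \<le> 8 * ((1 + x\<^sup>2) * (1 + z\<^sup>2) * (1 + w\<^sup>2) * (1 + y\<^sup>2))" for x z w y
    using norm_H_le_prod(3)[of y w x z] by (simp add: mult_ac)
  then show ?thesis
    unfolding moderate_growth_def hmult_XZWY split_def by (simp add: continuous_intros)
qed

locale H_action =
  fixes act :: "H \<Rightarrow> 'e::banach \<Rightarrow> 'e"
  assumes action: "cont_affine_isometric_action act"
begin

lemma act_hone: "act hone v = v"
  using action by (simp add: cont_affine_isometric_action_def)

lemma act_hmult: "act (hmult g h) v = act g (act h v)"
  using action unfolding cont_affine_isometric_action_def by blast

lemma continuous_on_orbit:
  "continuous_on UNIV \<Phi> \<Longrightarrow> continuous_on UNIV (\<lambda>s. act (\<Phi> s) v)"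
  using action continuous_on_compose2[of UNIV "\<lambda>g. act g v" UNIV \<Phi>]
  by (simp add: cont_affine_isometric_action_def)

lemma norm_act_diff: "norm (act g u - act g v) = norm (u - v)"
proof -
  obtain L b where "linear L" "\<And>x. norm (L x) = norm x" "\<And>x. act g x = L x + b"
    using action unfolding cont_affine_isometric_action_def affine_isometry_def by blast
  then show ?thesis by (simp flip: linear_diff)
qed

lemma norm_act_hmult_sub_le:
  "norm (act (hmult g h) v - v) \<le> norm (act g v - v) + norm (act h v - v)"
  using norm_triangle_ineq[of "act g (act h v) - act g v" "act g v - v"]
  by (simp add: act_hmult norm_act_diff)

lemma norm_act_hmult4_sub_le:
  "norm (act (hmult g1 (hmult g2 (hmult g3 g4))) v - v)
    \<le> norm (act g1 v - v) + norm (act g2 v - v) + norm (act g3 v - v) + norm (act g4 v - v)"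
  using norm_act_hmult_sub_le[of g1 "hmult g2 (hmult g3 g4)" v]
    norm_act_hmult_sub_le[of g2 "hmult g3 g4" v] norm_act_hmult_sub_le[of g3 g4 v]
  by linarith

lemma norm_act_one_param_sub_le:
  assumes hom: "\<And>s t. hmult (L s) (L t) = L (s + t)" and L0: "L 0 = hone"
    and L: "continuous_on UNIV L"
  shows "0 \<le> delta1 act L a v"
    and "norm (act (L t) v - v) \<le> (1 + \<bar>t\<bar> / exp a) * delta1 act L a v"
proof -
  define \<phi> where "\<phi> t = norm (act (L t) v - v)" for t
  have "continuous_on UNIV \<phi>"
    unfolding \<phi>_def[abs_def] by (intro continuous_intros continuous_on_orbit L)
  then have "bdd_above (\<phi> ` {- exp a .. exp a})"
    by (intro bounded_imp_bdd_above compact_imp_bounded compact_continuous_image)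
       (auto intro: continuous_on_subset)
  then have up: "\<phi> u \<le> delta1 act L a v" if "\<bar>u\<bar> \<le> exp a" for u
    unfolding delta1_def \<phi>_def[symmetric] using that by (intro cSUP_upper) auto
  have \<phi>0: "\<phi> 0 = 0" by (simp add: \<phi>_def L0 act_hone)
  show \<delta>0: "0 \<le> delta1 act L a v" using up[of 0] \<phi>0 by simp
  have multiple: "\<phi> (real n * u) \<le> real n * \<phi> u" for n u
  proof (induction n)
    case (Suc n)
    have "\<phi> (real (Suc n) * u) \<le> \<phi> u + \<phi> (real n * u)"
      using norm_act_hmult_sub_le[of "L u" "L (real n * u)" v]
      by (simp add: \<phi>_def hom algebra_simps)
    with Suc show ?case by (simp add: algebra_simps)
  qed (simp add: \<phi>0)
  show "norm (act (L t) v - v) \<le> (1 + \<bar>t\<bar> / exp a) * delta1 act L a v"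
  proof (cases "t = 0")
    case True then show ?thesis using \<phi>0 \<delta>0 by (simp add: \<phi>_def)
  next
    case False
    define n where "n = nat \<lceil>\<bar>t\<bar> / exp a\<rceil>"
    have n: "\<bar>t\<bar> / exp a \<le> real n" "real n \<le> \<bar>t\<bar> / exp a + 1" "0 < real n"
      using False by (auto simp: n_def)
    have "\<phi> t = \<phi> (real n * (t / real n))" using n(3) by simp
    also have "\<dots> \<le> real n * \<phi> (t / real n)" by (rule multiple)
    also have "\<dots> \<le> real n * delta1 act L a v"
      using n by (intro mult_left_mono up) (auto simp: field_simps)
    also have "\<dots> \<le> (1 + \<bar>t\<bar> / exp a) * delta1 act L a v"
      using n \<delta>0 by (intro mult_right_mono) auto
    finally show ?thesis by (simp add: \<phi>_def)
  qed
qed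

lemmas norm_act_hY_sub_le = norm_act_one_param_sub_le[OF one_param_hom(1) one_param_zero(1) continuous_on_one_param(1)]

lemmas norm_act_hW_sub_le = norm_act_one_param_sub_le[OF one_param_hom(2) one_param_zero(2) continuous_on_one_param(2)]

lemmas norm_act_hZ_sub_le = norm_act_one_param_sub_le[OF one_param_hom(3) one_param_zero(3) continuous_on_one_param(3)]

lemmas norm_act_hX_sub_le = norm_act_one_param_sub_le[OF one_param_hom(4) one_param_zero(4) continuous_on_one_param(4)]

lemma delta1_le_delta4:
  "0 \<le> delta1 act hY a v" "0 \<le> delta1 act hW b v" "0 \<le> delta1 act hZ c v" "0 \<le> delta1 act hX d v"
  "delta1 act hY a v \<le> delta4 act a b c d v" "delta1 act hW b v \<le> delta4 act a b c d v"
  "delta1 act hZ c v \<le> delta4 act a b c d v" "delta1 act hX d v \<le> delta4 act a b c d v"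
  using norm_act_hY_sub_le(1)[of a v] norm_act_hW_sub_le(1)[of b v]
    norm_act_hZ_sub_le(1)[of c v] norm_act_hX_sub_le(1)[of d v]
  by (auto simp: delta4_def)

lemma norm_act_one_param_sub_le_delta4:
  "norm (act (hY y) v - v) \<le> (1 + \<bar>y\<bar> / exp a) * delta4 act a b c d v"
  "norm (act (hW w) v - v) \<le> (1 + \<bar>w\<bar> / exp b) * delta4 act a b c d v"
  "norm (act (hZ z) v - v) \<le> (1 + \<bar>z\<bar> / exp c) * delta4 act a b c d v"
  "norm (act (hX x) v - v) \<le> (1 + \<bar>x\<bar> / exp d) * delta4 act a b c d v"
  by (rule order_trans[OF norm_act_hY_sub_le(2) mult_left_mono[OF delta1_le_delta4(5)]]
      order_trans[OF norm_act_hW_sub_le(2) mult_left_mono[OF delta1_le_delta4(6)]]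
      order_trans[OF norm_act_hZ_sub_le(2) mult_left_mono[OF delta1_le_delta4(7)]]
      order_trans[OF norm_act_hX_sub_le(2) mult_left_mono[OF delta1_le_delta4(8)]]; simp)+

lemma norm_act_one_params_prod_sub_le:
  assumes "g = hmult (hY y) (hmult (hW w) (hmult (hZ z) (hX x)))
    \<or> g = hmult (hX x) (hmult (hZ z) (hmult (hW w) (hY y)))"
  shows "norm (act g v - v) \<le> 4 * delta4 act a b c d v
    * ((1 + \<bar>y\<bar> / exp a) * (1 + \<bar>w\<bar> / exp b) * (1 + \<bar>z\<bar> / exp c) * (1 + \<bar>x\<bar> / exp d))"
proof -
  define \<delta> where "\<delta> = delta4 act a b c d v"
  have "0 \<le> \<delta>" using delta1_le_delta4 by (simp add: \<delta>_def delta4_def)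
  define uy uw uz ux where "uy = 1 + \<bar>y\<bar> / exp a" and "uw = 1 + \<bar>w\<bar> / exp b"
    and "uz = 1 + \<bar>z\<bar> / exp c" and "ux = 1 + \<bar>x\<bar> / exp d"
  have "norm (act g v - v) \<le> norm (act (hY y) v - v) + norm (act (hW w) v - v)
      + norm (act (hZ z) v - v) + norm (act (hX x) v - v)"
    using assms norm_act_hmult4_sub_le[of "hY y" "hW w" "hZ z" "hX x" v]
      norm_act_hmult4_sub_le[of "hX x" "hZ z" "hW w" "hY y" v] by auto
  also have "\<dots> \<le> uy * \<delta> + uw * \<delta> + uz * \<delta> + ux * \<delta>"
    unfolding uy_def uw_def uz_def ux_def \<delta>_def by (intro add_mono norm_act_one_param_sub_le_delta4)
  also have "\<dots> = \<delta> * (uy + uw + uz + ux)"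
    by (simp add: algebra_simps)
  also have "\<dots> \<le> \<delta> * (4 * (uy * uw * uz * ux))"
    by (intro mult_left_mono sum_le_4_prod \<open>0 \<le> \<delta>\<close>) (simp_all add: uy_def uw_def uz_def ux_def)
  finally show ?thesis by (simp add: \<delta>_def uy_def uw_def uz_def ux_def mult_ac)
qed

lemma act_linear_growth: "\<exists>K\<ge>0. \<forall>g. norm (act g v) \<le> K * (1 + norm g)"
proof -
  define D where "D = delta1 act hY 0 v + delta1 act hW 0 v + delta1 act hZ 0 v + delta1 act hX 0 v"
  have "0 \<le> D"
    unfolding D_def using norm_act_hY_sub_le(1) norm_act_hW_sub_le(1) norm_act_hZ_sub_le(1)
      norm_act_hX_sub_le(1) by (simp add: add_nonneg_nonneg)
  have "norm (act g v) \<le> (norm v + D) * (1 + norm g)" for g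
  proof -
    obtain y w z x where g: "g = (y, w, z, x)" by (cases g) auto
    have abs_le: "\<bar>y\<bar> \<le> norm g" "\<bar>w\<bar> \<le> norm g" "\<bar>z\<bar> \<le> norm g" "\<bar>x\<bar> \<le> norm g"
      unfolding g using norm_fst_le norm_snd_le order_trans
      by (metis fst_conv real_norm_def snd_conv)+
    have "norm (act g v - v) \<le> (1 + \<bar>y\<bar>) * delta1 act hY 0 v + (1 + \<bar>w\<bar>) * delta1 act hW 0 v
        + (1 + \<bar>z\<bar>) * delta1 act hZ 0 v + (1 + \<bar>x\<bar>) * delta1 act hX 0 v"
      using norm_act_hmult4_sub_le[of "hY y" "hW w" "hZ z" "hX x" v]
        norm_act_hY_sub_le(2)[where t=y and a=0 and v=v] norm_act_hW_sub_le(2)[where t=w and a=0 and v=v]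
        norm_act_hZ_sub_le(2)[where t=z and a=0 and v=v] norm_act_hX_sub_le(2)[where t=x and a=0 and v=v]
      by (simp add: g hmult_YWZX)
    also have "\<dots> \<le> (1 + norm g) * D"
      unfolding D_def distrib_left using abs_le norm_act_hY_sub_le(1) norm_act_hW_sub_le(1)
        norm_act_hZ_sub_le(1) norm_act_hX_sub_le(1)
      by (intro add_mono mult_right_mono) auto
    moreover have "norm v \<le> norm v * (1 + norm g)"
      by (rule le_mult_one_le) auto
    ultimately have "norm (act g v) \<le> norm v * (1 + norm g) + (1 + norm g) * D"
      using norm_triangle_sub[of "act g v" v] by linarith
    then show ?thesis
      by (simp add: algebra_simps)
  qed
  then show ?thesis
    using \<open>0 \<le> D\<close> by (intro exI[of _ "norm v + D"]) auto
qed

definition gauss_integrand ::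
    "real \<Rightarrow> real \<Rightarrow> real \<Rightarrow> real \<Rightarrow> (real \<times> real \<times> real \<times> real \<Rightarrow> H) \<Rightarrow> 'e \<Rightarrow> real \<times> real \<times> real \<times> real \<Rightarrow> 'e"
  where "gauss_integrand p q r s \<Phi> v = (\<lambda>(s1, s2, s3, s4).
    (gdens p s1 * gdens q s2 * gdens r s3 * gdens s s4) *\<^sub>R act (\<Phi> (s1, s2, s3, s4)) v)"

definition gauss_avg :: "real \<Rightarrow> real \<Rightarrow> real \<Rightarrow> real \<Rightarrow> (real \<times> real \<times> real \<times> real \<Rightarrow> H) \<Rightarrow> 'e \<Rightarrow> 'e"
  where "gauss_avg p q r s \<Phi> v = integral UNIV (gauss_integrand p q r s \<Phi> v)"

lemma continuous_on_gauss_integrand: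
  "moderate_growth \<Phi> \<Longrightarrow> continuous_on UNIV (gauss_integrand p q r s \<Phi> v)"
  unfolding gauss_integrand_def gdens_def moderate_growth_def split_def
  by (intro continuous_intros continuous_on_orbit continuous_on_compose2[OF continuous_on_normal_density])
     auto

lemma gauss_integrand_dominated:
  obtains K where "0 \<le> K"
    and "\<And>p q r s \<Phi> s1 s2 s3 s4. moderate_growth \<Phi> \<Longrightarrow>
      norm (gauss_integrand p q r s \<Phi> v (s1, s2, s3, s4))
        \<le> (K * (gdens p s1 * (1 + s1\<^sup>2))) * (gdens q s2 * (1 + s2\<^sup>2)) * (gdens r s3 * (1 + s3\<^sup>2))
          * (gdens s s4 * (1 + s4\<^sup>2))"
proof -
  obtain K where "0 \<le> K" and K: "\<And>g. norm (act g v) \<le> K * (1 + norm g)"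
    using act_linear_growth by blast
  have "norm (gauss_integrand p q r s \<Phi> v (s1, s2, s3, s4))
      \<le> (9 * K * (gdens p s1 * (1 + s1\<^sup>2))) * (gdens q s2 * (1 + s2\<^sup>2)) * (gdens r s3 * (1 + s3\<^sup>2))
        * (gdens s s4 * (1 + s4\<^sup>2))"
    if "moderate_growth \<Phi>" for p q r s \<Phi> s1 s2 s3 s4
  proof -
    define \<rho> where "\<rho> = gdens p s1 * gdens q s2 * gdens r s3 * gdens s s4"
    have "0 \<le> \<rho>" by (simp add: \<rho>_def gdens_def)
    define P where "P = (1 + s1\<^sup>2) * (1 + s2\<^sup>2) * (1 + s3\<^sup>2) * (1 + s4\<^sup>2)"
    have "norm (\<Phi> (s1, s2, s3, s4)) \<le> 8 * P"
      using that by (simp add: moderate_growth_def P_def)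
    then have "1 + norm (\<Phi> (s1, s2, s3, s4)) \<le> 9 * P"
      using one_le_prod_squares[of s1 s2 s3 s4] by (simp add: P_def)
    then have "norm (act (\<Phi> (s1, s2, s3, s4)) v) \<le> K * (9 * P)"
      using K[of "\<Phi> (s1, s2, s3, s4)"] \<open>0 \<le> K\<close> by (meson mult_left_mono order_trans)
    then have "\<rho> * norm (act (\<Phi> (s1, s2, s3, s4)) v) \<le> \<rho> * (K * (9 * P))"
      using \<open>0 \<le> \<rho>\<close> by (rule mult_left_mono)
    moreover have "norm (gauss_integrand p q r s \<Phi> v (s1, s2, s3, s4)) = \<rho> * norm (act (\<Phi> (s1, s2, s3, s4)) v)"
      using \<open>0 \<le> \<rho>\<close> by (simp add: gauss_integrand_def \<rho>_def)
    moreover have "\<rho> * (K * (9 * P)) = (9 * K * (gdens p s1 * (1 + s1\<^sup>2))) * (gdens q s2 * (1 + s2\<^sup>2))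
        * (gdens r s3 * (1 + s3\<^sup>2)) * (gdens s s4 * (1 + s4\<^sup>2))"
      by (simp only: \<rho>_def P_def mult_ac)
    ultimately show ?thesis by simp
  qed
  with \<open>0 \<le> K\<close> show thesis
    by (intro that[of "9 * K"]) auto
qed

lemma gauss_integrand_integrable:
  assumes "moderate_growth \<Phi>"
  shows "gauss_integrand p q r s \<Phi> v integrable_on UNIV"
    and "(\<lambda>s2. gauss_integrand p q r s \<Phi> v (s1, s2, s3, s4)) integrable_on UNIV"
proof -
  obtain K where "0 \<le> K" and K: "\<And>p q r s \<Phi> s1 s2 s3 s4. moderate_growth \<Phi> \<Longrightarrow>
      norm (gauss_integrand p q r s \<Phi> v (s1, s2, s3, s4))
        \<le> (K * (gdens p s1 * (1 + s1\<^sup>2))) * (gdens q s2 * (1 + s2\<^sup>2)) * (gdens r s3 * (1 + s3\<^sup>2))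
          * (gdens s s4 * (1 + s4\<^sup>2))"
    using gauss_integrand_dominated by blast
  note real4 = integral_UNIV_real4_iterated[OF continuous_on_gauss_integrand[OF assms]
      integrable_weight_cmult[OF gdens_square_weight \<open>0 \<le> K\<close>] gdens_square_weight gdens_square_weight
      gdens_square_weight K[OF assms]]
  show "gauss_integrand p q r s \<Phi> v integrable_on UNIV"
    and "(\<lambda>s2. gauss_integrand p q r s \<Phi> v (s1, s2, s3, s4)) integrable_on UNIV"
    by (rule real4(1), rule real4(2))
qed

lemma norm_gauss_avg_diff_le:
  assumes \<Phi>: "moderate_growth \<Phi>" and \<Psi>: "moderate_growth \<Psi>"
    and w: "integrable_weight w1" "integrable_weight w3" "integrable_weight w4"
    and inner: "\<And>s1 s3 s4. norm (integral UNIV (\<lambda>s2. gauss_integrand p q r s \<Phi> v (s1, s2, s3, s4))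
      - integral UNIV (\<lambda>s2. gauss_integrand p q r s \<Psi> v (s1, s2, s3, s4))) \<le> w1 s1 * w3 s3 * w4 s4"
  shows "norm (gauss_avg p q r s \<Phi> v - gauss_avg p q r s \<Psi> v)
    \<le> integral UNIV w1 * integral UNIV w3 * integral UNIV w4"
proof -
  obtain K where "0 \<le> K" and K: "\<And>p q r s \<Phi> s1 s2 s3 s4. moderate_growth \<Phi> \<Longrightarrow>
      norm (gauss_integrand p q r s \<Phi> v (s1, s2, s3, s4))
        \<le> (K * (gdens p s1 * (1 + s1\<^sup>2))) * (gdens q s2 * (1 + s2\<^sup>2)) * (gdens r s3 * (1 + s3\<^sup>2))
          * (gdens s s4 * (1 + s4\<^sup>2))"
    using gauss_integrand_dominated by blast
  show ?thesis
    unfolding gauss_avg_def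
    by (rule norm_integral_UNIV_real4_diff_le[OF continuous_on_gauss_integrand[OF \<Phi>]
        continuous_on_gauss_integrand[OF \<Psi>] integrable_weight_cmult[OF gdens_square_weight \<open>0 \<le> K\<close>]
        gdens_square_weight gdens_square_weight gdens_square_weight K[OF \<Phi>] K[OF \<Psi>] w inner])
qed

lemma gauss_avg_hone: "gauss_avg p q r s (\<lambda>_. hone) v = v"
proof -
  define \<rho> where "\<rho> = (\<lambda>(s1, s2, s3, s4). gdens p s1 * gdens q s2 * gdens r s3 * gdens s s4)"
  have "(\<rho> has_integral 1) UNIV"
    using integral_UNIV_prod4_mult[OF gdens_weight(1) gdens_weight(1) gdens_weight(1) gdens_weight(1)]
    by (simp add: \<rho>_def gdens_weight(2) has_integral_iff)
  from has_integral_scaleR_left[OF this, of v]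
  show ?thesis
    by (simp add: gauss_avg_def gauss_integrand_def act_hone \<rho>_def case_prod_beta' integral_unique)
qed

lemma norm_gauss_avg_sub_le:
  assumes \<Phi>: "moderate_growth \<Phi>"
    and disp: "\<And>s1 s2 s3 s4. norm (act (\<Phi> (s1, s2, s3, s4)) v - v)
      \<le> D * ((1 + \<bar>s1\<bar> / exp p) * (1 + \<bar>s2\<bar> / exp q) * (1 + \<bar>s3\<bar> / exp r) * (1 + \<bar>s4\<bar> / exp s))"
  shows "norm (gauss_avg p q r s \<Phi> v - v) \<le> 16 * D"
proof -
  have "norm (act (\<Phi> (0, 0, 0, 0)) v - v) \<le> D" using disp[of 0 0 0 0] by simp
  then have "0 \<le> D" by (meson norm_ge_zero order_trans)
  define w where "w s t = gdens s t * (1 + \<bar>t\<bar> / exp s)" for s t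
  have w: "integrable_weight (w s)" "0 \<le> integral UNIV (w s)" "integral UNIV (w s) \<le> 2" for s
    using gdens_abs_weight[of s] integrable_on_lborel
    by (auto simp: w_def[abs_def] integrable_weight_def intro!: integral_nonneg)
  have "norm (integral UNIV (\<lambda>s2. gauss_integrand p q r s \<Phi> v (s1, s2, s3, s4))
      - integral UNIV (\<lambda>s2. gauss_integrand p q r s (\<lambda>_. hone) v (s1, s2, s3, s4)))
      \<le> (2 * D * w p s1) * w r s3 * w s s4" for s1 s3 s4
  proof -
    have "norm (integral UNIV (\<lambda>s2. gauss_integrand p q r s \<Phi> v (s1, s2, s3, s4)
        - gauss_integrand p q r s (\<lambda>_. hone) v (s1, s2, s3, s4)))
        \<le> integral UNIV (\<lambda>s2. (D * w p s1 * w r s3 * w s s4) * w q s2)"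
    proof (rule integral_norm_bound_integral)
      fix s2
      have "norm (act (\<Phi> (s1, s2, s3, s4)) v - v) * (gdens p s1 * gdens q s2 * gdens r s3 * gdens s s4)
          \<le> D * ((1 + \<bar>s1\<bar> / exp p) * (1 + \<bar>s2\<bar> / exp q) * (1 + \<bar>s3\<bar> / exp r) * (1 + \<bar>s4\<bar> / exp s))
            * (gdens p s1 * gdens q s2 * gdens r s3 * gdens s s4)"
        by (intro mult_right_mono disp) (simp add: gdens_nonneg)
      then show "norm (gauss_integrand p q r s \<Phi> v (s1, s2, s3, s4)
          - gauss_integrand p q r s (\<lambda>_. hone) v (s1, s2, s3, s4)) \<le> (D * w p s1 * w r s3 * w s s4) * w q s2"
        by (simp add: gauss_integrand_def act_hone w_def gdens_def mult_ac flip: scaleR_diff_right)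
    qed (use w(1) integrable_on_lborel gauss_integrand_integrable(2) \<Phi> moderate_growth_hone
      in \<open>auto simp: integrable_weight_def intro!: integrable_diff integrable_on_mult_right\<close>)
    also have "\<dots> = (D * w p s1 * w r s3 * w s s4) * integral UNIV (w q)"
      by simp
    also have "\<dots> \<le> (D * w p s1 * w r s3 * w s s4) * 2"
      using w(3)[of q] \<open>0 \<le> D\<close> by (intro mult_left_mono) (auto simp: w_def gdens_nonneg)
    finally show ?thesis
      by (simp add: integral_diff gauss_integrand_integrable(2) \<Phi> moderate_growth_hone mult_ac)
  qed
  then have "norm (gauss_avg p q r s \<Phi> v - gauss_avg p q r s (\<lambda>_. hone) v)
      \<le> integral UNIV (\<lambda>t. 2 * D * w p t) * integral UNIV (w r) * integral UNIV (w s)"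
    using integrable_weight_cmult[OF w(1)] \<open>0 \<le> D\<close>
    by (intro norm_gauss_avg_diff_le \<Phi> moderate_growth_hone w(1)) auto
  also have "\<dots> \<le> 2 * D * (2 * 2 * 2)"
    using w(2,3) mult_mono[OF mult_mono[OF w(3)[of p] w(3)[of r]] w(3)[of s]] \<open>0 \<le> D\<close>
    by (simp add: mult_left_mono mult_ac)
  finally show ?thesis
    by (simp add: gauss_avg_hone)
qed

lemma norm_gauss_avg_YWZX_sub_le: "norm (gauss_avg a b c d (\<lambda>\<sigma>. \<sigma>) v - v) \<le> 64 * delta4 act a b c d v"
  using norm_gauss_avg_sub_le[OF moderate_growth_id, of v "4 * delta4 act a b c d v" a b c d]
    norm_act_one_params_prod_sub_le[OF disjI1, of _ _ _ _ _ v a b c d]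
  by (simp add: hmult_YWZX)

lemma norm_gauss_avg_XZWY_sub_le:
  "norm (gauss_avg d c b a (\<lambda>(x, z, w, y). hmult (hX x) (hmult (hZ z) (hmult (hW w) (hY y)))) v - v)
    \<le> 64 * delta4 act a b c d v"
  using norm_gauss_avg_sub_le[OF moderate_growth_XZWY, of v "4 * delta4 act a b c d v" d c b a]
    norm_act_one_params_prod_sub_le[OF disjI2, of _ _ _ _ _ v a b c d]
  by (simp add: mult_ac)

lemma norm_section_Z_shift_le:
  assumes small: "exp (a + d - b) \<le> 1"
  shows "norm (integral UNIV (\<lambda>z. gauss_integrand d c b a
        (\<lambda>(x, z, w, y). hmult (hX x) (hmult (hZ z) (hmult (hW w) (hY y)))) v (x, z, w, y))
      - integral UNIV (\<lambda>z. gauss_integrand d c b a (\<lambda>(x, z, w, y). (y, w + x * y, z, x)) v (x, z, w, y)))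
    \<le> (72 * exp (b + d - c) * delta4 act a b c d v * (gdens d x * (1 + (x / exp d)\<^sup>2)))
      * (gdens b w * (1 + \<bar>w\<bar> / exp b)) * (gdens a y * (1 + \<bar>y\<bar> / exp a))"
proof -
  define \<delta> where "\<delta> = delta4 act a b c d v"
  have "0 \<le> \<delta>" using delta1_le_delta4 by (simp add: \<delta>_def delta4_def)
  define r where "r = gdens d x * gdens b w * gdens a y"
  have "0 \<le> r" by (simp add: r_def gdens_nonneg)
  define Kz where "Kz z = act (y, w + x * y, z, x) v" for z
  define T where "T = 2 * x * w + x\<^sup>2 * y"
  have F: "gauss_integrand d c b a (\<lambda>(x, z, w, y). hmult (hX x) (hmult (hZ z) (hmult (hW w) (hY y)))) v (x, z, w, y)
      = r *\<^sub>R (normal_density 0 (exp c) z *\<^sub>R Kz (z + T))"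
    and G: "gauss_integrand d c b a (\<lambda>(x, z, w, y). (y, w + x * y, z, x)) v (x, z, w, y)
      = r *\<^sub>R (normal_density 0 (exp c) z *\<^sub>R Kz z)" for z
    by (simp_all add: gauss_integrand_def hmult_XZWY r_def Kz_def T_def gdens_def algebra_simps)
  have "norm (integral UNIV (\<lambda>z. normal_density 0 (exp c) z *\<^sub>R Kz (z + T))
      - integral UNIV (\<lambda>z. normal_density 0 (exp c) z *\<^sub>R Kz z))
      \<le> 12 * (\<bar>T\<bar> / exp c) * (delta1 act hZ c v + delta1 act hZ c v / exp c * exp c)"
  proof (rule norm_integral_normal_shift_le)
    show "continuous_on UNIV Kz"
      unfolding Kz_def by (intro continuous_on_orbit continuous_intros)
    show "norm (Kz z - Kz 0) \<le> delta1 act hZ c v + delta1 act hZ c v / exp c * \<bar>z\<bar>" for z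
    proof -
      have "Kz z = act (y, w + x * y, 0, x) (act (hZ z) v)" "Kz 0 = act (y, w + x * y, 0, x) v"
        by (simp_all add: Kz_def hmult_right_hZ flip: act_hmult)
      then show ?thesis
        using norm_act_hZ_sub_le(2)[where t = z and a = c and v = v]
        by (simp add: norm_act_diff algebra_simps)
    qed
  qed (use delta1_le_delta4 in auto)
  also have "\<dots> = 24 * delta1 act hZ c v * (\<bar>T\<bar> / exp c)"
    by simp
  also have "\<dots> \<le> 24 * \<delta> * (3 * exp (b + d - c)
      * ((1 + (x / exp d)\<^sup>2) * (1 + \<bar>y\<bar> / exp a) * (1 + \<bar>w\<bar> / exp b)))"
  proof -
    have "\<bar>T\<bar> / exp c \<le> 3 * exp (b + d - c) * ((1 + (x / exp d)\<^sup>2) * (1 + \<bar>y\<bar> / exp a) * (1 + \<bar>w\<bar> / exp b))"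
      using Z_shift_bound[of "exp a" "exp b" "exp c" "exp d" x w y] small
      by (simp add: T_def exp_add exp_diff)
    then show ?thesis
      using delta1_le_delta4 \<open>0 \<le> \<delta>\<close> by (intro mult_left_mono mult_mono) (auto simp: \<delta>_def)
  qed
  finally have "r * norm (integral UNIV (\<lambda>z. normal_density 0 (exp c) z *\<^sub>R Kz (z + T))
      - integral UNIV (\<lambda>z. normal_density 0 (exp c) z *\<^sub>R Kz z))
      \<le> r * (24 * \<delta> * (3 * exp (b + d - c)
        * ((1 + (x / exp d)\<^sup>2) * (1 + \<bar>y\<bar> / exp a) * (1 + \<bar>w\<bar> / exp b))))"
    using \<open>0 \<le> r\<close> by (rule mult_left_mono)
  then show ?thesis
    unfolding F G integral_cmul scaleR_diff_right[symmetric] using \<open>0 \<le> r\<close>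
    by (simp add: r_def \<delta>_def mult_ac)
qed

lemma norm_gauss_avg_Z_shift_le:
  assumes "exp (a + d - b) \<le> 1"
  shows "norm (gauss_avg d c b a (\<lambda>(x, z, w, y). hmult (hX x) (hmult (hZ z) (hmult (hW w) (hY y)))) v
      - gauss_avg d c b a (\<lambda>(x, z, w, y). (y, w + x * y, z, x)) v)
    \<le> 576 * exp (b + d - c) * delta4 act a b c d v"
proof -
  define C where "C = 72 * exp (b + d - c) * delta4 act a b c d v"
  have "0 \<le> C" using delta1_le_delta4 by (simp add: C_def delta4_def)
  have "norm (gauss_avg d c b a (\<lambda>(x, z, w, y). hmult (hX x) (hmult (hZ z) (hmult (hW w) (hY y)))) v
      - gauss_avg d c b a (\<lambda>(x, z, w, y). (y, w + x * y, z, x)) v)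
      \<le> integral UNIV (\<lambda>t. C * (gdens d t * (1 + (t / exp d)\<^sup>2)))
        * integral UNIV (\<lambda>t. gdens b t * (1 + \<bar>t\<bar> / exp b))
        * integral UNIV (\<lambda>t. gdens a t * (1 + \<bar>t\<bar> / exp a))"
    using norm_section_Z_shift_le[OF assms] \<open>0 \<le> C\<close>
    by (intro norm_gauss_avg_diff_le moderate_growth_XZWY moderate_growth_shear_rev gdens_abs_weight
        integrable_weight_cmult gdens_scaled_square_weight) (simp_all add: C_def)
  also have "\<dots> \<le> (C * 2) * 2 * 2"
    using gdens_abs_weight(2,3) \<open>0 \<le> C\<close>
    by (intro mult_mono) (simp_all add: gdens_scaled_square_weight(2))
  finally show ?thesis
    by (simp add: C_def)
qed

lemma norm_section_W_shift_le:
  assumes small: "exp (b + d - c) \<le> 1"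
  shows "norm (integral UNIV (\<lambda>w. gauss_integrand a b c d (\<lambda>(y, w, z, x). (y, w + x * y, z, x)) v (y, w, z, x))
      - integral UNIV (\<lambda>w. gauss_integrand a b c d (\<lambda>\<sigma>. \<sigma>) v (y, w, z, x)))
    \<le> (60 * exp (a + d - b) * delta4 act a b c d v * (gdens a y * (1 + \<bar>y\<bar> / exp a)))
      * gdens c z * (gdens d x * (1 + (x / exp d)\<^sup>2))"
proof -
  define \<delta> where "\<delta> = delta4 act a b c d v"
  have "0 \<le> \<delta>" using delta1_le_delta4 by (simp add: \<delta>_def delta4_def)
  define r where "r = gdens a y * gdens c z * gdens d x"
  have "0 \<le> r" by (simp add: r_def gdens_nonneg)
  define Kw where "Kw w = act (y, w, z, x) v" for w
  define B where "B = \<delta> / exp b + 2 * \<bar>x\<bar> * \<delta> / exp c"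
  have "0 \<le> B" using \<open>0 \<le> \<delta>\<close> by (simp add: B_def)
  have F: "gauss_integrand a b c d (\<lambda>(y, w, z, x). (y, w + x * y, z, x)) v (y, w, z, x)
      = r *\<^sub>R (normal_density 0 (exp b) w *\<^sub>R Kw (w + x * y))"
    and G: "gauss_integrand a b c d (\<lambda>\<sigma>. \<sigma>) v (y, w, z, x) = r *\<^sub>R (normal_density 0 (exp b) w *\<^sub>R Kw w)" for w
    by (simp_all add: gauss_integrand_def r_def Kw_def gdens_def algebra_simps)
  have "norm (integral UNIV (\<lambda>w. normal_density 0 (exp b) w *\<^sub>R Kw (w + x * y))
      - integral UNIV (\<lambda>w. normal_density 0 (exp b) w *\<^sub>R Kw w))
      \<le> 12 * (\<bar>x * y\<bar> / exp b) * (2 * \<delta> + B * exp b)"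
  proof (rule norm_integral_normal_shift_le)
    show "continuous_on UNIV Kw"
      unfolding Kw_def by (intro continuous_on_orbit continuous_intros)
    show "norm (Kw w - Kw 0) \<le> 2 * \<delta> + B * \<bar>w\<bar>" for w
    proof -
      have "Kw w = act (y, 0, z, x) (act (hW w) (act (hZ (- (2 * x * w))) v))" "Kw 0 = act (y, 0, z, x) v"
        by (simp_all add: Kw_def hmult_right_hW_hZ flip: act_hmult)
      then have "norm (Kw w - Kw 0) \<le> norm (act (hW w) v - v) + norm (act (hZ (- (2 * x * w))) v - v)"
        using norm_act_hmult_sub_le[of "hW w" "hZ (- (2 * x * w))" v] by (simp add: norm_act_diff act_hmult)
      also have "\<dots> \<le> (1 + \<bar>w\<bar> / exp b) * \<delta> + (1 + \<bar>- (2 * x * w)\<bar> / exp c) * \<delta>"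
        unfolding \<delta>_def by (intro add_mono norm_act_one_param_sub_le_delta4)
      also have "\<dots> = 2 * \<delta> + B * \<bar>w\<bar>"
        by (simp add: B_def abs_mult algebra_simps add_divide_distrib)
      finally show ?thesis .
    qed
  qed (use \<open>0 \<le> \<delta>\<close> \<open>0 \<le> B\<close> in auto)
  also have "\<dots> = 12 * \<delta> * ((\<bar>x\<bar> * \<bar>y\<bar> / exp b) * (3 + 2 * \<bar>x\<bar> * exp b / exp c))"
    by (simp add: B_def abs_mult field_simps)
  also have "\<dots> \<le> 12 * \<delta> * (5 * exp (a + d - b) * ((1 + (x / exp d)\<^sup>2) * (1 + \<bar>y\<bar> / exp a)))"
    using W_shift_bound[of "exp a" "exp b" "exp c" "exp d" x y] small \<open>0 \<le> \<delta>\<close>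
    by (intro mult_left_mono) (auto simp: exp_add exp_diff)
  finally have "r * norm (integral UNIV (\<lambda>w. normal_density 0 (exp b) w *\<^sub>R Kw (w + x * y))
      - integral UNIV (\<lambda>w. normal_density 0 (exp b) w *\<^sub>R Kw w))
      \<le> r * (12 * \<delta> * (5 * exp (a + d - b) * ((1 + (x / exp d)\<^sup>2) * (1 + \<bar>y\<bar> / exp a))))"
    using \<open>0 \<le> r\<close> by (rule mult_left_mono)
  moreover have "norm (integral UNIV (\<lambda>w. gauss_integrand a b c d (\<lambda>(y, w, z, x). (y, w + x * y, z, x)) v (y, w, z, x))
      - integral UNIV (\<lambda>w. gauss_integrand a b c d (\<lambda>\<sigma>. \<sigma>) v (y, w, z, x)))
      = r * norm (integral UNIV (\<lambda>w. normal_density 0 (exp b) w *\<^sub>R Kw (w + x * y))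
      - integral UNIV (\<lambda>w. normal_density 0 (exp b) w *\<^sub>R Kw w))"
    unfolding F G integral_cmul scaleR_diff_right[symmetric] using \<open>0 \<le> r\<close> by simp
  moreover have "r * (12 * \<delta> * (5 * exp (a + d - b) * ((1 + (x / exp d)\<^sup>2) * (1 + \<bar>y\<bar> / exp a))))
      = (60 * exp (a + d - b) * delta4 act a b c d v * (gdens a y * (1 + \<bar>y\<bar> / exp a)))
        * gdens c z * (gdens d x * (1 + (x / exp d)\<^sup>2))"
    by (simp add: r_def \<delta>_def algebra_simps add_divide_distrib)
  ultimately show ?thesis
    by linarith
qed

lemma norm_gauss_avg_W_shift_le:
  assumes "exp (b + d - c) \<le> 1"
  shows "norm (gauss_avg a b c d (\<lambda>(y, w, z, x). (y, w + x * y, z, x)) v - gauss_avg a b c d (\<lambda>\<sigma>. \<sigma>) v)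
    \<le> 240 * exp (a + d - b) * delta4 act a b c d v"
proof -
  define C where "C = 60 * exp (a + d - b) * delta4 act a b c d v"
  have "0 \<le> C" using delta1_le_delta4 by (simp add: C_def delta4_def)
  have "norm (gauss_avg a b c d (\<lambda>(y, w, z, x). (y, w + x * y, z, x)) v - gauss_avg a b c d (\<lambda>\<sigma>. \<sigma>) v)
      \<le> integral UNIV (\<lambda>t. C * (gdens a t * (1 + \<bar>t\<bar> / exp a)))
        * integral UNIV (gdens c) * integral UNIV (\<lambda>t. gdens d t * (1 + (t / exp d)\<^sup>2))"
    using norm_section_W_shift_le[OF assms] \<open>0 \<le> C\<close>
    by (intro norm_gauss_avg_diff_le moderate_growth_shear moderate_growth_id gdens_abs_weight
        integrable_weight_cmult gdens_weight gdens_scaled_square_weight) (simp_all add: C_def)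
  also have "\<dots> \<le> (C * 2) * 1 * 2"
    using gdens_abs_weight(2,3) \<open>0 \<le> C\<close>
    by (intro mult_mono) (simp_all add: gdens_weight(2) gdens_scaled_square_weight(2) mult_left_mono)
  finally show ?thesis
    by (simp add: C_def)
qed

lemma gauss_avg_shear_reverse:
  "gauss_avg d c b a (\<lambda>(x, z, w, y). (y, w + x * y, z, x)) v
    = gauss_avg a b c d (\<lambda>(y, w, z, x). (y, w + x * y, z, x)) v"
proof -
  have "(\<lambda>(s1, s2, s3, s4). gauss_integrand a b c d (\<lambda>(y, w, z, x). (y, w + x * y, z, x)) v (s4, s3, s2, s1))
      = gauss_integrand d c b a (\<lambda>(x, z, w, y). (y, w + x * y, z, x)) v"
    by (auto simp: gauss_integrand_def mult_ac)
  with integral_UNIV_reverse4[OF gauss_integrand_integrable(1)[OF moderate_growth_shear, of a b c d v]]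
  show ?thesis
    by (simp add: gauss_avg_def)
qed

lemma norm_nu_act_sub_nut_act_le:
  "norm (nu_act act a b c d v - nut_act act d c b a v)
    \<le> 576 * (exp (a + d - b) + exp (b + d - c)) * delta4 act a b c d v"
proof -
  define \<delta> where "\<delta> = delta4 act a b c d v"
  have "0 \<le> \<delta>" using delta1_le_delta4 by (simp add: \<delta>_def delta4_def)
  have nu: "nu_act act a b c d v = gauss_avg a b c d (\<lambda>\<sigma>. \<sigma>) v"
    by (simp add: nu_act_def gauss_avg_def gauss_integrand_def hmult_YWZX)
  have nut: "nut_act act d c b a v
      = gauss_avg d c b a (\<lambda>(x, z, w, y). hmult (hX x) (hmult (hZ z) (hmult (hW w) (hY y)))) v"
    by (simp add: nut_act_def gauss_avg_def gauss_integrand_def)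
  show ?thesis
  proof (cases "exp (a + d - b) \<le> 1 \<and> exp (b + d - c) \<le> 1")
    case True
    have "norm (nu_act act a b c d v - nut_act act d c b a v)
        \<le> norm (gauss_avg d c b a (\<lambda>(x, z, w, y). hmult (hX x) (hmult (hZ z) (hmult (hW w) (hY y)))) v
            - gauss_avg d c b a (\<lambda>(x, z, w, y). (y, w + x * y, z, x)) v)
          + norm (gauss_avg a b c d (\<lambda>(y, w, z, x). (y, w + x * y, z, x)) v - gauss_avg a b c d (\<lambda>\<sigma>. \<sigma>) v)"
      unfolding nu nut gauss_avg_shear_reverse
      using norm_triangle_ineq[of "gauss_avg d c b a (\<lambda>(x, z, w, y). hmult (hX x) (hmult (hZ z) (hmult (hW w) (hY y)))) v
            - gauss_avg a b c d (\<lambda>(y, w, z, x). (y, w + x * y, z, x)) v"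
          "gauss_avg a b c d (\<lambda>(y, w, z, x). (y, w + x * y, z, x)) v - gauss_avg a b c d (\<lambda>\<sigma>. \<sigma>) v"]
      by (simp add: norm_minus_commute)
    also have "\<dots> \<le> 576 * exp (b + d - c) * \<delta> + 240 * exp (a + d - b) * \<delta>"
      unfolding \<delta>_def using True by (intro add_mono norm_gauss_avg_Z_shift_le norm_gauss_avg_W_shift_le) auto
    also have "\<dots> \<le> 576 * (exp (a + d - b) + exp (b + d - c)) * \<delta>"
      using \<open>0 \<le> \<delta>\<close> by (simp add: algebra_simps)
    finally show ?thesis by (simp add: \<delta>_def)
  next
    case False
    then have "1 \<le> exp (a + d - b) + exp (b + d - c)"
      by (auto intro: add_increasing add_increasing2 less_imp_le)
    have "norm (nu_act act a b c d v - nut_act act d c b a v) \<le> 64 * \<delta> + 64 * \<delta>"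
      unfolding nu nut \<delta>_def
      by (rule norm_diff_triangle_le[OF norm_gauss_avg_YWZX_sub_le])
         (subst norm_minus_commute, rule norm_gauss_avg_XZWY_sub_le)
    also have "\<dots> \<le> 576 * ((exp (a + d - b) + exp (b + d - c)) * \<delta>)"
      using mult_right_mono[OF \<open>1 \<le> _\<close> \<open>0 \<le> \<delta>\<close>] \<open>0 \<le> \<delta>\<close> by linarith
    finally show ?thesis by (simp add: \<delta>_def mult_ac)
  qed
qed

end

theorem lemma5p5:
  assumes "uniformly_convex TYPE('e::banach)"
  shows "\<exists>C>0. \<forall>act :: H \<Rightarrow> 'e \<Rightarrow> 'e. cont_affine_isometric_action act \<longrightarrow>
           (\<forall>a b c d \<xi>. norm (nu_act act a b c d \<xi> - nut_act act d c b a \<xi>)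
              \<le> C * (exp (a + d - b) + exp (b + d - c)) * delta4 act a b c d \<xi>)"
proof (intro exI[of _ 576] conjI allI impI)
  fix act :: "H \<Rightarrow> 'e \<Rightarrow> 'e" and a b c d :: real and \<xi> :: 'e
  assume "cont_affine_isometric_action act"
  then interpret H_action act by unfold_locales
  show "norm (nu_act act a b c d \<xi> - nut_act act d c b a \<xi>)
      \<le> 576 * (exp (a + d - b) + exp (b + d - c)) * delta4 act a b c d \<xi>"
    by (rule norm_nu_act_sub_nut_act_le)
qed simp

end
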